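(* Let $g\ge 3$ and $n\ge g+2$. Suppose $G$ is a connected graph of order $n$ with girth $g$ whose Sombor index $SO(G)$ is minimum among all connected graphs of order $n$ with girth $g$. Then $G$ is unicyclic and is isomorphic to the graph obtained from the cycle $C_g$ by attaching a single path of length $n-g$ at one vertex of the cycle (i.e. the unicyclic graph with cycle length $g$ having exactly one pendent path, of length at least two); in particular $SO(G)=\sqrt5+3\sqrt{13}+2\sqrt2\,(n-4)$.
   Context: For a graph $G$, $d_G(w)$ denotes the degree of vertex $w$, and the Sombor index is $SO(G)=\sum_{ab\in E(G)}\sqrt{d_G(a)^2+d_G(b)^2}$. The girth of a graph is the length of its shortest cycle. $C_g$ denotes the cycle on $g$ vertices. A pendent path in $G$ is a path $u u_1\cdots u_k$ ($k\ge1$) with $d_G(u)\ge 3$, $d_G(u_k)=1$ and $d_G(u_i)=2$ for $1\le i\le k-1$; $k$ is its length. *)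

theory Defs
  imports Complex_Main
begin

definition simple_graph :: "'a set \<Rightarrow> 'a set set \<Rightarrow> bool" where
  "simple_graph V E \<longleftrightarrow> finite V \<and>
     (\<forall>e\<in>E. \<exists>a b. a \<noteq> b \<and> a \<in> V \<and> b \<in> V \<and> e = {a, b})"

definition degree :: "'a set set \<Rightarrow> 'a \<Rightarrow> nat" where
  "degree E v = card {e\<in>E. v \<in> e}"

definition adj :: "'a set set \<Rightarrow> 'a \<Rightarrow> 'a \<Rightarrow> bool" where
  "adj E u v \<longleftrightarrow> {u, v} \<in> E"

definition connected_graph :: "'a set \<Rightarrow> 'a set set \<Rightarrow> bool" where
  "connected_graph V E \<longleftrightarrow> V \<noteq> {} \<and> (\<forall>u\<in>V. \<forall>v\<in>V. (adj E)\<^sup>*\<^sup>* u v)"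

definition sombor :: "'a set set \<Rightarrow> real" where
  "sombor E = (\<Sum>e\<in>E. sqrt (\<Sum>x\<in>e. (real (degree E x))^2))"

definition is_cycle :: "'a set set \<Rightarrow> 'a list \<Rightarrow> bool" where
  "is_cycle E xs \<longleftrightarrow> length xs \<ge> 3 \<and> distinct xs \<and>
     (\<forall>i<length xs. {xs ! i, xs ! ((i + 1) mod length xs)} \<in> E)"

definition cycle_edges :: "'a list \<Rightarrow> 'a set set" where
  "cycle_edges xs = {{xs ! i, xs ! ((i + 1) mod length xs)} | i. i < length xs}"

definition has_girth :: "'a set set \<Rightarrow> nat \<Rightarrow> bool" where
  "has_girth E g \<longleftrightarrow> (\<exists>xs. is_cycle E xs \<and> length xs = g) \<and>
     (\<forall>xs. is_cycle E xs \<longrightarrow> g \<le> length xs)"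

text \<open>Unicyclic: connected with exactly one cycle (as a subgraph, i.e. as an edge set).\<close>
definition unicyclic :: "'a set \<Rightarrow> 'a set set \<Rightarrow> bool" where
  "unicyclic V E \<longleftrightarrow> connected_graph V E \<and> card {cycle_edges xs | xs. is_cycle E xs} = 1"

definition graph_iso :: "'a set \<Rightarrow> 'a set set \<Rightarrow> 'b set \<Rightarrow> 'b set set \<Rightarrow> bool" where
  "graph_iso V E V' E' \<longleftrightarrow> (\<exists>f. bij_betw f V V' \<and>
     (\<forall>u\<in>V. \<forall>v\<in>V. {u, v} \<in> E \<longleftrightarrow> {f u, f v} \<in> E'))"

text \<open>Cycle C_g on 0,...,g-1 with a path 0, g, g+1, ..., n-1 (length n-g) attached at vertex 0.\<close>
definition tadpole_V :: "nat \<Rightarrow> nat set" where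
  "tadpole_V n = {0..<n}"

definition tadpole_E :: "nat \<Rightarrow> nat \<Rightarrow> nat set set" where
  "tadpole_E g n = {{i, Suc i} | i. Suc i < g} \<union> {{g - 1, 0}} \<union> {{0, g}}
                   \<union> {{i, Suc i} | i. g \<le> i \<and> Suc i < n}"

end

theory Submission
  imports Defs
begin

text \<open>The proof is a discharging argument. Each edge hands its Sombor term, or a little less, to its two
  endpoints (\<open>edge_share\<close>), exactly so on the edges of the tadpole. Summing over the vertices,
  \<open>SO(G) \<ge> 2 sqrt 2 n + \<lambda> (2m - 2n) + \<Sum>\<^sub>v ex(v)\<close> with \<open>\<lambda> > 0\<close>, where the excess
  \<open>ex(v)\<close> vanishes at degrees 1 and 2 and is at least \<open>sqrt 5 - sqrt 2 / 2\<close> at degree at least 3.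
  A connected graph with a cycle has \<open>m \<ge> n\<close>, and since \<open>n > g\<close> some vertex has degree at
  least 3. The tadpole is a competitor with \<open>SO = 2 sqrt 2 n + K\<close>, \<open>K < 2 (sqrt 5 - sqrt 2 / 2)\<close>,
  so a minimiser has exactly one vertex \<open>w\<close> of degree at least 3; its neighbours then have degree
  at most 2, which gives \<open>ex(w) \<ge> K\<close> with equality only at degree 3. Hence \<open>deg w = 3\<close>,
  \<open>m = n\<close>, and counting degrees leaves exactly one leaf. Peeling off that leaf repeatedly
  identifies the graph with the tadpole and shows its cycle is unique.\<close>

section \<open>Simple graphs\<close>

lemma simple_graph_finite_vertices: "simple_graph V E \<Longrightarrow> finite V"
  unfolding simple_graph_def by blast

lemma edge_doubleton:
  "simple_graph V E \<Longrightarrow> e \<in> E \<Longrightarrow> \<exists>a b. a \<noteq> b \<and> a \<in> V \<and> b \<in> V \<and> e = {a, b}"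
  unfolding simple_graph_def by blast

lemma edge_subset_vertices: "simple_graph V E \<Longrightarrow> e \<in> E \<Longrightarrow> e \<subseteq> V"
  by (drule (1) edge_doubleton) auto

lemma card_edge: "simple_graph V E \<Longrightarrow> e \<in> E \<Longrightarrow> card e = 2"
  by (drule (1) edge_doubleton) auto

lemma simple_graph_finite_edges: "simple_graph V E \<Longrightarrow> finite E"
proof -
  assume s: "simple_graph V E"
  have "E \<subseteq> Pow V" using edge_subset_vertices[OF s] by blast
  then show ?thesis using simple_graph_finite_vertices[OF s] finite_subset by blast
qed

lemma sum_edges_endpoints:
  assumes s: "simple_graph V E"
  shows "(\<Sum>e\<in>E. \<Sum>x\<in>e. F e x) = (\<Sum>v\<in>V. \<Sum>e\<in>{e\<in>E. v \<in> e}. F e v)"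
proof -
  have "(\<Sum>v\<in>V. \<Sum>e\<in>{e\<in>E. v \<in> e}. F e v) = (\<Sum>e\<in>E. \<Sum>v\<in>{v\<in>V. v \<in> e}. F e v)"
    by (rule sum.swap_restrict[OF simple_graph_finite_vertices[OF s] simple_graph_finite_edges[OF s]])
  also have "\<dots> = (\<Sum>e\<in>E. \<Sum>x\<in>e. F e x)"
  proof (rule sum.cong[OF refl])
    fix e assume "e \<in> E"
    then have "{v\<in>V. v \<in> e} = e" using edge_subset_vertices[OF s] by blast
    then show "(\<Sum>v\<in>{v\<in>V. v \<in> e}. F e v) = (\<Sum>x\<in>e. F e x)" by simp
  qed
  finally show ?thesis by simp
qed

lemma handshake:
  assumes s: "simple_graph V E"
  shows "(\<Sum>v\<in>V. real (degree E v)) = 2 * real (card E)"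
proof -
  have "(\<Sum>v\<in>V. real (degree E v)) = (\<Sum>v\<in>V. \<Sum>e\<in>{e\<in>E. v \<in> e}. 1)"
    unfolding degree_def by simp
  also have "\<dots> = (\<Sum>e\<in>E. \<Sum>x\<in>e. 1)"
    by (rule sum_edges_endpoints[OF s, symmetric])
  also have "\<dots> = (\<Sum>e\<in>E. 2)"
    using card_edge[OF s] by (intro sum.cong) auto
  finally show ?thesis by simp
qed

lemma adj_sym: "adj E x y \<Longrightarrow> adj E y x"
  unfolding adj_def by (simp add: insert_commute)

lemma adj_rtranclp_sym: "(adj E)\<^sup>*\<^sup>* x y \<Longrightarrow> (adj E)\<^sup>*\<^sup>* y x"
  by (induction rule: rtranclp_induct) (auto intro: adj_sym converse_rtranclp_into_rtranclp)

lemma rtranclp_map: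
  assumes "\<And>a b. R a b \<Longrightarrow> S\<^sup>*\<^sup>* (h a) (h b)" and "R\<^sup>*\<^sup>* x y"
  shows "S\<^sup>*\<^sup>* (h x) (h y)"
  using assms(2)
proof (induction rule: rtranclp_induct)
  case (step y z)
  then show ?case using assms(1) by (meson rtranclp_trans)
qed simp

lemma adj_in_vertices: "simple_graph V E \<Longrightarrow> adj E x y \<Longrightarrow> x \<in> V \<and> y \<in> V"
  unfolding adj_def using edge_subset_vertices by blast

lemma connected_graph_subset_closed:
  assumes c: "connected_graph V E" and x: "x \<in> S" "x \<in> V"
    and closed: "\<And>a b. a \<in> S \<Longrightarrow> adj E a b \<Longrightarrow> b \<in> S"
  shows "V \<subseteq> S"
proof
  fix v assume v: "v \<in> V"
  have "(adj E)\<^sup>*\<^sup>* x v" using c x v unfolding connected_graph_def by blast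
  then show "v \<in> S"
    by (induction rule: rtranclp_induct) (use x closed in auto)
qed

lemma degree_ge1_of_edge: "simple_graph V E \<Longrightarrow> e \<in> E \<Longrightarrow> x \<in> e \<Longrightarrow> degree E x \<ge> 1"
  unfolding degree_def
  by (metis (mono_tags, lifting) One_nat_def Suc_leI card_gt_0_iff empty_iff finite_subset
      mem_Collect_eq simple_graph_finite_edges subsetI)

lemma degree_ge1_obtain_neighbour:
  assumes s: "simple_graph V E" and "degree E x \<ge> 1"
  shows "\<exists>y. {x, y} \<in> E \<and> y \<noteq> x \<and> y \<in> V"
proof -
  have "{e\<in>E. x \<in> e} \<noteq> {}"
    using assms(2) unfolding degree_def by (metis card.empty not_one_le_zero)
  then obtain e where "e \<in> E" "x \<in> e" by blast
  then show ?thesis using edge_doubleton[OF s] by (fastforce simp: insert_commute)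
qed

lemma degree_eq_card_neighbours:
  assumes s: "simple_graph V E" and v: "v \<in> V"
  shows "degree E v = card {u\<in>V. {v, u} \<in> E}"
proof -
  have "{e\<in>E. v \<in> e} = (\<lambda>u. {v, u}) ` {u\<in>V. {v, u} \<in> E}"
    using edge_doubleton[OF s] by (fastforce simp: insert_commute)
  moreover have "inj_on (\<lambda>u. {v, u}) {u\<in>V. {v, u} \<in> E}"
    by (auto simp: inj_on_def doubleton_eq_iff)
  ultimately show ?thesis unfolding degree_def by (simp add: card_image)
qed

lemma leaf_adj_unique:
  assumes s: "simple_graph V E" and d: "degree E x = 1" and e: "{x, y} \<in> E"
    and a: "adj E x z"
  shows "z = y"
proof -
  obtain f where f: "{e\<in>E. x \<in> e} = {f}"
    using d unfolding degree_def by (meson card_1_singletonE)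
  have "{x, z} \<in> {e\<in>E. x \<in> e}" "{x, y} \<in> {e\<in>E. x \<in> e}" using a e unfolding adj_def by auto
  then have "{x, z} = {x, y}" unfolding f by simp
  moreover have "card {x, z} = 2" using card_edge[OF s] a unfolding adj_def by blast
  then have "x \<noteq> z" by auto
  ultimately show ?thesis by (metis doubleton_eq_iff)
qed

lemma leaf_edge_iff:
  assumes "simple_graph V E" and "degree E l = 1" and "{l, u} \<in> E"
  shows "{l, x} \<in> E \<longleftrightarrow> x = u"
proof
  assume "{l, x} \<in> E"
  then show "x = u" using leaf_adj_unique[OF assms] unfolding adj_def by simp
qed (use assms(3) in simp)

lemma degree_pos:
  assumes s: "simple_graph V E" and c: "connected_graph V E" and "2 \<le> card V" and v: "v \<in> V"
  shows "degree E v \<ge> 1"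
proof -
  have "card (V - {v}) \<noteq> 0" using assms(3) v simple_graph_finite_vertices[OF s] by simp
  then have "V - {v} \<noteq> {}" by (metis card.empty)
  then obtain u where u: "u \<in> V" "u \<noteq> v" by blast
  have "(adj E)\<^sup>*\<^sup>* v u" using c v u unfolding connected_graph_def by blast
  then obtain z where "adj E v z" by (rule converse_rtranclpE) (use u in auto)
  then show ?thesis using degree_ge1_of_edge[OF s] unfolding adj_def by blast
qed

lemma no_isolated_edge:
  assumes s: "simple_graph V E" and c: "connected_graph V E" and "3 \<le> card V"
    and e: "{a, b} \<in> E"
  shows "\<not> (degree E a = 1 \<and> degree E b = 1)"
proof
  assume d: "degree E a = 1 \<and> degree E b = 1"
  have e': "{b, a} \<in> E" using e by (simp add: insert_commute)
  have "V \<subseteq> {a, b}"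
  proof (rule connected_graph_subset_closed[OF c])
    show "a \<in> V" using edge_subset_vertices[OF s e] by simp
    fix x y assume "x \<in> {a, b}" and xy: "adj E x y"
    then consider "x = a" | "x = b" by blast
    then show "y \<in> {a, b}"
    proof cases
      case 1
      then show ?thesis using leaf_adj_unique[OF s _ e, of y] d xy by simp
    next
      case 2
      then show ?thesis using leaf_adj_unique[OF s _ e', of y] d xy by simp
    qed
  qed simp
  then have "card V \<le> card {a, b}" by (rule card_mono[rotated]) simp
  also have "\<dots> \<le> 2" by (simp add: card_insert_le_m1)
  finally show False using assms(3) by simp
qed

section \<open>Cycles\<close>

lemma cycle_vertices_subset:
  assumes s: "simple_graph V E" and c: "is_cycle E xs"
  shows "set xs \<subseteq> V"
proof
  fix x assume "x \<in> set xs"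
  then obtain i where i: "i < length xs" "xs ! i = x" by (auto simp: in_set_conv_nth)
  then have "{xs ! i, xs ! ((i + 1) mod length xs)} \<in> E" using c unfolding is_cycle_def by blast
  then show "x \<in> V" using edge_subset_vertices[OF s] i by blast
qed

definition prev_index :: "nat \<Rightarrow> nat \<Rightarrow> nat" where
  "prev_index L i = (if i = 0 then L - 1 else i - 1)"

lemma cycle_neighbour_edges:
  assumes c: "is_cycle E xs" and i: "i < length xs"
  defines "p \<equiv> prev_index (length xs) i"
  shows "{xs ! i, xs ! (Suc i mod length xs)} \<in> E" "{xs ! p, xs ! i} \<in> E"
    "{xs ! i, xs ! (Suc i mod length xs)} \<noteq> {xs ! p, xs ! i}"
    "Suc p mod length xs = i" "p < length xs"
proof -
  let ?L = "length xs"
  have L: "?L \<ge> 3" "distinct xs" using c unfolding is_cycle_def by auto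
  show pl: "p < ?L" and sp: "Suc p mod ?L = i" using i L unfolding p_def prev_index_def by auto
  show "{xs ! i, xs ! (Suc i mod ?L)} \<in> E" using c i unfolding is_cycle_def by simp
  have "{xs ! p, xs ! (Suc p mod ?L)} \<in> E" using c pl unfolding is_cycle_def by simp
  then show "{xs ! p, xs ! i} \<in> E" using sp by simp
  have si: "Suc i mod ?L < ?L" "Suc i mod ?L \<noteq> i" "Suc i mod ?L \<noteq> p"
    using L i unfolding p_def prev_index_def by (auto simp: mod_Suc)
  then have "xs ! (Suc i mod ?L) \<notin> {xs ! p, xs ! i}" using L i pl by (simp add: nth_eq_iff_index_eq)
  then show "{xs ! i, xs ! (Suc i mod ?L)} \<noteq> {xs ! p, xs ! i}" by blast
qed

lemma cycle_vertex_degree_ge2: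
  assumes f: "finite E" and c: "is_cycle E xs" and x: "x \<in> set xs"
  shows "degree E x \<ge> 2"
proof -
  obtain i where i: "i < length xs" "xs ! i = x" using x by (auto simp: in_set_conv_nth)
  note t = cycle_neighbour_edges[OF c i(1)]
  let ?A = "{xs ! i, xs ! (Suc i mod length xs)}" and ?B = "{xs ! prev_index (length xs) i, xs ! i}"
  have "{?A, ?B} \<subseteq> {e\<in>E. x \<in> e}" using t i by auto
  then have "card {?A, ?B} \<le> card {e\<in>E. x \<in> e}" by (rule card_mono[rotated]) (use f in auto)
  then show ?thesis using t(3) unfolding degree_def by simp
qed

lemma cycle_vertex_incident_edges:
  assumes f: "finite E" and c: "is_cycle E xs" and i: "i < length xs"
    and d: "degree E (xs ! i) \<le> 2"
  shows "{e\<in>E. xs ! i \<in> e} = {{xs ! i, xs ! (Suc i mod length xs)},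
      {xs ! prev_index (length xs) i, xs ! i}}"
proof -
  note t = cycle_neighbour_edges[OF c i(1)]
  let ?A = "{xs ! i, xs ! (Suc i mod length xs)}" and ?B = "{xs ! prev_index (length xs) i, xs ! i}"
  have sub: "{?A, ?B} \<subseteq> {e\<in>E. xs ! i \<in> e}" using t by auto
  have "card {?A, ?B} = 2" using t(3) by simp
  then have "card {e\<in>E. xs ! i \<in> e} \<le> card {?A, ?B}" using d unfolding degree_def by simp
  then show ?thesis using sub f by (intro card_seteq[symmetric]) auto
qed

lemma cycle_adj_closed:
  assumes f: "finite E" and c: "is_cycle E xs" and x: "x \<in> set xs"
    and d: "degree E x \<le> 2" and a: "adj E x y"
  shows "y \<in> set xs"
proof -
  obtain i where i: "i < length xs" "xs ! i = x" using x by (auto simp: in_set_conv_nth)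
  have d': "degree E (xs ! i) \<le> 2" using d i(2) by simp
  have "{x, y} \<in> {e\<in>E. xs ! i \<in> e}" using a i unfolding adj_def by simp
  then have "{x, y} \<in> {{xs ! i, xs ! (Suc i mod length xs)}, {xs ! prev_index (length xs) i, xs ! i}}"
    unfolding cycle_vertex_incident_edges[OF f c i(1) d'] .
  then have "{x, y} \<in> {{x, xs ! (Suc i mod length xs)}, {xs ! prev_index (length xs) i, x}}"
    unfolding i(2) .
  then have "y \<in> {x, xs ! (Suc i mod length xs), xs ! prev_index (length xs) i}"
    by (auto simp: doubleton_eq_iff)
  moreover have "xs ! (Suc i mod length xs) \<in> set xs" using i(1) by (intro nth_mem mod_less_divisor) linarith
  moreover have "xs ! prev_index (length xs) i \<in> set xs"
    using cycle_neighbour_edges(5)[OF c i(1)] by simp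
  ultimately show ?thesis using x by blast
qed

lemma cycle_of_max_degree_2:
  assumes s: "simple_graph V E" and cn: "connected_graph V E" and c: "is_cycle E xs"
    and d: "\<forall>x\<in>set xs. degree E x \<le> 2"
  shows "V = set xs" "E = cycle_edges xs"
proof -
  have f: "finite E" using simple_graph_finite_edges[OF s] .
  have sub: "set xs \<subseteq> V" using cycle_vertices_subset[OF s c] .
  have ne: "xs ! 0 \<in> set xs" using c unfolding is_cycle_def by (auto intro!: nth_mem)
  have "V \<subseteq> set xs"
    by (rule connected_graph_subset_closed[OF cn ne]) (use sub ne cycle_adj_closed[OF f c] d in auto)
  then show V: "V = set xs" using sub by blast
  show "E = cycle_edges xs"
  proof
    show "cycle_edges xs \<subseteq> E" using c unfolding is_cycle_def cycle_edges_def by auto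
    show "E \<subseteq> cycle_edges xs"
    proof
      fix e assume e: "e \<in> E"
      then obtain a b where ab: "a \<in> V" "e = {a, b}" using edge_doubleton[OF s] by blast
      then obtain i where i: "i < length xs" "xs ! i = a" using V by (auto simp: in_set_conv_nth)
      let ?p = "prev_index (length xs) i"
      have d': "degree E (xs ! i) \<le> 2" using d i(1) by simp
      have "e \<in> {e\<in>E. xs ! i \<in> e}" using e ab i by simp
      then have "e \<in> {{xs ! i, xs ! (Suc i mod length xs)}, {xs ! ?p, xs ! i}}"
        unfolding cycle_vertex_incident_edges[OF f c i(1) d'] .
      moreover have "{xs ! ?p, xs ! i} \<in> cycle_edges xs" unfolding cycle_edges_def
        by (rule CollectI, rule exI[of _ ?p]) (use cycle_neighbour_edges(4,5)[OF c i(1)] in simp)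
      moreover have "{xs ! i, xs ! (Suc i mod length xs)} \<in> cycle_edges xs"
        using i(1) unfolding cycle_edges_def by auto
      ultimately show "e \<in> cycle_edges xs" by blast
    qed
  qed
qed

lemma cycle_edges_nth_iff:
  assumes d: "distinct xs" and i: "i < length xs" and j: "j < length xs"
  shows "{xs ! i, xs ! j} \<in> cycle_edges xs \<longleftrightarrow>
         j = Suc i mod length xs \<or> i = Suc j mod length xs"
proof
  assume "{xs ! i, xs ! j} \<in> cycle_edges xs"
  then obtain k where k: "k < length xs" "{xs ! i, xs ! j} = {xs ! k, xs ! (Suc k mod length xs)}"
    unfolding cycle_edges_def by auto
  have L0: "0 < length xs" using k(1) by linarith
  then have k2: "Suc k mod length xs < length xs" by simp
  from k(2) have "(xs ! i = xs ! k \<and> xs ! j = xs ! (Suc k mod length xs)) \<or>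
                  (xs ! i = xs ! (Suc k mod length xs) \<and> xs ! j = xs ! k)"
    by (auto simp: doubleton_eq_iff)
  then show "j = Suc i mod length xs \<or> i = Suc j mod length xs"
    using d i j k k2 L0 by (auto simp: nth_eq_iff_index_eq)
next
  assume "j = Suc i mod length xs \<or> i = Suc j mod length xs"
  then show "{xs ! i, xs ! j} \<in> cycle_edges xs" unfolding cycle_edges_def using i j
    by (auto simp: insert_commute)
qed

lemma card_set_cycle: "is_cycle E xs \<Longrightarrow> card (set xs) = length xs"
  unfolding is_cycle_def by (simp add: distinct_card)

lemma cycle_edges_rotate_subset:
  assumes "xs \<noteq> []"
  shows "cycle_edges (rotate k xs) \<subseteq> cycle_edges xs"
proof
  let ?L = "length xs"
  fix e assume "e \<in> cycle_edges (rotate k xs)"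
  then obtain i where i: "i < ?L" "e = {rotate k xs ! i, rotate k xs ! (Suc i mod ?L)}"
    unfolding cycle_edges_def by auto
  have L: "?L > 0" using assms by simp
  have nr: "rotate k xs ! j = xs ! ((j + k) mod ?L)" if "j < ?L" for j
    using that by (simp add: nth_rotate add.commute)
  have "(Suc i mod ?L + k) mod ?L = Suc ((i + k) mod ?L) mod ?L"
    by (metis add_Suc mod_Suc_eq mod_add_left_eq)
  then have "rotate k xs ! (Suc i mod ?L) = xs ! (Suc ((i + k) mod ?L) mod ?L)"
    using nr[of "Suc i mod ?L"] L by simp
  moreover have "rotate k xs ! i = xs ! ((i + k) mod ?L)" using nr i(1) .
  ultimately have "e = {xs ! ((i + k) mod ?L), xs ! (Suc ((i + k) mod ?L) mod ?L)}" using i(2) by simp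
  moreover have "(i + k) mod ?L < ?L" using L by simp
  ultimately show "e \<in> cycle_edges xs"
    unfolding cycle_edges_def by (intro CollectI exI[of _ "(i + k) mod ?L"]) simp
qed

lemma cycle_edges_rotate:
  assumes "xs \<noteq> []"
  shows "cycle_edges (rotate k xs) = cycle_edges xs"
proof
  show "cycle_edges (rotate k xs) \<subseteq> cycle_edges xs" by (rule cycle_edges_rotate_subset[OF assms])
  let ?m = "length xs - k mod length xs"
  have "rotate ?m (rotate k xs) = rotate (?m + k mod length xs) xs"
    by (metis rotate_conv_mod rotate_rotate)
  also have "\<dots> = xs" using assms by simp
  finally show "cycle_edges xs \<subseteq> cycle_edges (rotate k xs)"
    using cycle_edges_rotate_subset[of "rotate k xs" ?m] assms by simp
qed

section \<open>Counting edges\<close>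

lemma adj_insert_rtranclp:
  assumes "(adj (insert {a, b} F))\<^sup>*\<^sup>* x y"
  shows "(adj F)\<^sup>*\<^sup>* x y \<or> (((adj F)\<^sup>*\<^sup>* x a \<or> (adj F)\<^sup>*\<^sup>* x b) \<and> ((adj F)\<^sup>*\<^sup>* a y \<or> (adj F)\<^sup>*\<^sup>* b y))"
  using assms
proof (induction rule: rtranclp_induct)
  case base then show ?case by simp
next
  case (step y z)
  have "{y, z} = {a, b} \<or> adj F y z" using step(2) unfolding adj_def by simp
  then show ?case
  proof
    assume "{y, z} = {a, b}"
    then have yz: "(y = a \<and> z = b) \<or> (y = b \<and> z = a)" by (auto simp: doubleton_eq_iff)
    show ?case using step(3) yz by auto
  next
    assume a: "adj F y z"
    show ?case using step(3) rtranclp.rtrancl_into_rtrancl[of "adj F" _ y z, OF _ a] by blast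
  qed
qed

definition pairwise_unreachable :: "'a set set \<Rightarrow> 'a set \<Rightarrow> bool" where
  "pairwise_unreachable F R \<longleftrightarrow> (\<forall>x\<in>R. \<forall>y\<in>R. (adj F)\<^sup>*\<^sup>* x y \<longrightarrow> x = y)"

lemma card_reaching_le_1:
  assumes "finite R" "pairwise_unreachable F R"
  shows "card {x\<in>R. (adj F)\<^sup>*\<^sup>* x a} \<le> 1"
proof -
  have "x = y" if "x \<in> R" "y \<in> R" "(adj F)\<^sup>*\<^sup>* x a" "(adj F)\<^sup>*\<^sup>* y a" for x y
  proof -
    have "(adj F)\<^sup>*\<^sup>* x y" using that(3) adj_rtranclp_sym[OF that(4)] by (rule rtranclp_trans)
    then show "x = y" using assms(2) that(1,2) unfolding pairwise_unreachable_def by blast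
  qed
  then show ?thesis using assms(1) by (simp add: card_le_Suc0_iff_eq)
qed

lemma pairwise_unreachable_insert_edge:
  assumes "pairwise_unreachable F R"
  shows "pairwise_unreachable (insert {a, b} F) (R - {x\<in>R. (adj F)\<^sup>*\<^sup>* x a})"
  unfolding pairwise_unreachable_def
proof (intro ballI impI)
  fix x y assume x: "x \<in> R - {x\<in>R. (adj F)\<^sup>*\<^sup>* x a}" and y: "y \<in> R - {x\<in>R. (adj F)\<^sup>*\<^sup>* x a}"
    and p: "(adj (insert {a, b} F))\<^sup>*\<^sup>* x y"
  have "\<not> (adj F)\<^sup>*\<^sup>* x a" using x by simp
  moreover have "\<not> (adj F)\<^sup>*\<^sup>* a y"
  proof
    assume "(adj F)\<^sup>*\<^sup>* a y"
    then show False using y adj_rtranclp_sym[of F a y] by simp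
  qed
  ultimately have "(adj F)\<^sup>*\<^sup>* x y \<or> ((adj F)\<^sup>*\<^sup>* x b \<and> (adj F)\<^sup>*\<^sup>* b y)"
    using adj_insert_rtranclp[OF p] by argo
  then have "(adj F)\<^sup>*\<^sup>* x y" by (blast intro: rtranclp_trans)
  then show "x = y" using assms x y unfolding pairwise_unreachable_def by blast
qed

text \<open>Each edge merges at most two classes of mutually reachable vertices, so some
  \<open>card V - card F\<close> vertices of \<open>V\<close> are pairwise unreachable.\<close>

lemma exists_pairwise_unreachable_set:
  assumes "finite F" "finite V" "\<forall>e\<in>F. \<exists>a b. e = {a, b}"
  shows "\<exists>R \<subseteq> V. card V \<le> card R + card F \<and> pairwise_unreachable F R"
  using assms
proof (induction F rule: finite_induct)
  case empty
  have "(adj {})\<^sup>*\<^sup>* x y \<Longrightarrow> x = y" for x y :: 'a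
    by (induction rule: rtranclp_induct) (auto simp: adj_def)
  then show ?case unfolding pairwise_unreachable_def by (intro exI[of _ V]) auto
next
  case (insert e F)
  obtain a b where e: "e = {a, b}" using insert(5) by blast
  obtain R where R: "R \<subseteq> V" "card V \<le> card R + card F" "pairwise_unreachable F R" using insert by auto
  define X where "X = {x\<in>R. (adj F)\<^sup>*\<^sup>* x a}"
  have fR: "finite R" using R(1) insert(4) finite_subset by blast
  have "card X \<le> 1" unfolding X_def by (rule card_reaching_le_1[OF fR R(3)])
  moreover have "card (R - X) = card R - card X" "card X \<le> card R"
    using fR unfolding X_def by (auto intro: card_Diff_subset card_mono)
  ultimately have "card V \<le> card (R - X) + card (insert e F)" using R(2) insert(1,2) by simp
  moreover have "pairwise_unreachable (insert e F) (R - X)"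
    unfolding e X_def by (rule pairwise_unreachable_insert_edge[OF R(3)])
  ultimately show ?case using R(1) by (intro exI[of _ "R - X"]) auto
qed

lemma cycle_path_avoiding_edge:
  assumes c: "is_cycle E xs" and k: "1 \<le> k" "k < length xs"
  shows "(adj (E - {{xs ! 0, xs ! 1}}))\<^sup>*\<^sup>* (xs ! 1) (xs ! k)"
  using k
proof (induction k)
  case (Suc k)
  have L: "distinct xs" and cyc_edges: "\<forall>i<length xs. {xs ! i, xs ! (Suc i mod length xs)} \<in> E"
    using c unfolding is_cycle_def by auto
  show ?case
  proof (cases "k = 0")
    case False
    have neq: "xs ! i \<noteq> xs ! j" if "i < length xs" "j < length xs" "i \<noteq> j" for i j
      using L that by (simp add: nth_eq_iff_index_eq)
    have "0 < length xs" "k < length xs" using Suc(3) by linarith+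
    then have "xs ! 0 \<notin> {xs ! k, xs ! Suc k}"
      using neq[OF _ _ False[symmetric]] neq[OF _ Suc(3)] by blast
    moreover have "{xs ! k, xs ! Suc k} \<in> E" using cyc_edges Suc(3) by (metis Suc_lessD mod_less)
    ultimately have "adj (E - {{xs ! 0, xs ! 1}}) (xs ! k) (xs ! Suc k)" unfolding adj_def by auto
    then show ?thesis using Suc False by (meson Suc_lessD less_one not_le rtranclp.rtrancl_into_rtrancl)
  qed simp
qed simp

lemma cycle_delete_edge_path:
  assumes c: "is_cycle E xs"
  shows "(adj (E - {{xs ! 0, xs ! 1}}))\<^sup>*\<^sup>* (xs ! 1) (xs ! 0)"
proof -
  let ?L = "length xs"
  have L: "?L \<ge> 3" "distinct xs" and cyc_edges: "\<forall>i<?L. {xs ! i, xs ! (Suc i mod ?L)} \<in> E"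
    using c unfolding is_cycle_def by auto
  have L1: "Suc (?L - 1) = ?L" "?L - 1 < ?L" using L by linarith+
  have neq: "xs ! i \<noteq> xs ! j" if "i < ?L" "j < ?L" "i \<noteq> j" for i j
    using L that by (simp add: nth_eq_iff_index_eq)
  have "0 < ?L" "1 < ?L" "?L - 1 \<noteq> 0" "?L - 1 \<noteq> 1" using L(1) by linarith+
  then have "xs ! (?L - 1) \<notin> {xs ! 0, xs ! 1}" using neq L1(2) by blast
  moreover have "{xs ! (?L - 1), xs ! 0} \<in> E" using cyc_edges L1 by (metis mod_self)
  ultimately have "adj (E - {{xs ! 0, xs ! 1}}) (xs ! (?L - 1)) (xs ! 0)" unfolding adj_def by auto
  moreover have "(adj (E - {{xs ! 0, xs ! 1}}))\<^sup>*\<^sup>* (xs ! 1) (xs ! (?L - 1))"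
    using cycle_path_avoiding_edge[OF c] L by simp
  ultimately show ?thesis by (simp add: rtranclp.rtrancl_into_rtrancl)
qed

lemma card_le_Suc_card_edges:
  assumes "finite F" "finite V" "\<forall>e\<in>F. \<exists>a b. e = {a, b}"
    and connected: "\<forall>u\<in>V. \<forall>v\<in>V. (adj F)\<^sup>*\<^sup>* u v"
  shows "card V \<le> card F + 1"
proof -
  obtain R where R: "R \<subseteq> V" "card V \<le> card R + card F" "pairwise_unreachable F R"
    using exists_pairwise_unreachable_set[OF assms(1-3)] by blast
  have "\<forall>x\<in>R. \<forall>y\<in>R. x = y" using R(1,3) connected unfolding pairwise_unreachable_def by blast
  then have "card R \<le> 1" using finite_subset[OF R(1) assms(2)] by (simp add: card_le_Suc0_iff_eq)
  then show ?thesis using R(2) by linarith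
qed

lemma card_vertices_le_card_edges:
  assumes s: "simple_graph V E" and cn: "connected_graph V E" and c: "is_cycle E xs"
  shows "card V \<le> card E"
proof -
  define e0 where "e0 = {xs ! 0, xs ! 1}"
  define F where "F = E - {e0}"
  have "0 < length xs" "Suc 0 mod length xs = 1" using c unfolding is_cycle_def by auto
  then have e0E: "e0 \<in> E" using c unfolding e0_def is_cycle_def by force
  have fE: "finite E" using simple_graph_finite_edges[OF s] .
  have pF: "(adj F)\<^sup>*\<^sup>* (xs ! 1) (xs ! 0)" using cycle_delete_edge_path[OF c] unfolding F_def e0_def .
  have "(adj F)\<^sup>*\<^sup>* p q" if "adj E p q" for p q
  proof (cases "{p, q} = e0")
    case True
    then have "(p = xs ! 0 \<and> q = xs ! 1) \<or> (p = xs ! 1 \<and> q = xs ! 0)" unfolding e0_def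
      by (auto simp: doubleton_eq_iff)
    then show ?thesis using pF adj_rtranclp_sym[OF pF] by blast
  next
    case False
    then have "adj F p q" using that unfolding adj_def F_def by simp
    then show ?thesis by simp
  qed
  then have "(adj F)\<^sup>*\<^sup>* u v" if "u \<in> V" "v \<in> V" for u v
    using cn that rtranclp_map[of "adj E" "adj F" id] unfolding connected_graph_def by simp
  then have "card V \<le> card F + 1"
    using card_le_Suc_card_edges[of F V] fE simple_graph_finite_vertices[OF s] edge_doubleton[OF s]
    unfolding F_def by blast
  moreover have "card E \<noteq> 0" using e0E fE by auto
  then have "card F + 1 = card E" unfolding F_def using card_Diff_singleton[OF e0E] by linarith
  ultimately show ?thesis by simp
qed

section \<open>Splitting the Sombor terms\<close>

definition low_share :: "nat \<Rightarrow> real" where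
  "low_share d = (if d = 1 then sqrt 5 - sqrt 2 else sqrt (4 + (real d)^2) - sqrt 2)"

definition edge_share :: "nat \<Rightarrow> nat \<Rightarrow> real" where
  "edge_share p q = (if 3 \<le> p \<and> 3 \<le> q then real p / sqrt 2 else low_share p)"

definition surplus_weight :: real where
  "surplus_weight = 3 * sqrt 2 - sqrt 5"

definition high_excess_bound :: real where
  "high_excess_bound = sqrt 5 - sqrt 2 / 2"

text \<open>\<open>sombor (tadpole_E g n) = 2 * sqrt 2 * n + tadpole_excess\<close>.\<close>

definition tadpole_excess :: real where
  "tadpole_excess = 3 * sqrt 13 + sqrt 5 - 8 * sqrt 2"

lemma sqrt_8: "sqrt 8 = 2 * sqrt 2"
proof -
  have "sqrt 8 = sqrt (4 * 2)" by simp
  also have "\<dots> = sqrt 4 * sqrt 2" by (rule real_sqrt_mult)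
  also have "sqrt 4 = 2" by (simp add: real_sqrt_eq_iff)
  finally show ?thesis .
qed

lemma low_share_2: "low_share 2 = sqrt 2"
  unfolding low_share_def using sqrt_8 by simp

lemma sqrt_bounds:
  "sqrt 2 < 1.415" "sqrt 13 < 3.61" "sqrt 5 < 2.25" "2.2 < sqrt 5" "1 < sqrt 10"
  by (rule real_less_lsqrt real_less_rsqrt; simp add: power2_eq_square)+

lemma sqrt_4_plus_sq_minus_sqrt_1_plus_sq_le:
  assumes q: "q \<ge> (2::nat)"
  shows "sqrt (4 + (real q)^2) - sqrt (1 + (real q)^2) \<le> 2 * sqrt 2 - sqrt 5"
proof -
  define A where "A = sqrt (4 + (real q)^2)"
  define B where "B = sqrt (1 + (real q)^2)"
  have "(real q)^2 \<ge> 2^2" using q by (intro power_mono) auto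
  then have A8: "A \<ge> sqrt 8" and B5: "B \<ge> sqrt 5" unfolding A_def B_def by simp_all
  have "(A - B) * (A + B) = 3" unfolding A_def B_def by (simp add: algebra_simps)
  also have "\<dots> = (sqrt 8 - sqrt 5) * (sqrt 8 + sqrt 5)" by (simp add: algebra_simps)
  also have "\<dots> \<le> (sqrt 8 - sqrt 5) * (A + B)"
    using A8 B5 by (intro mult_left_mono) auto
  finally have "(A - B) * (A + B) \<le> (sqrt 8 - sqrt 5) * (A + B)" .
  moreover have "A + B > 0" using A8 B5 by (smt (verit) real_sqrt_gt_0_iff)
  ultimately have "A - B \<le> sqrt 8 - sqrt 5" by (simp add: mult_le_cancel_right)
  then show ?thesis unfolding A_def B_def sqrt_8 .
qed

lemma high_share_le_low_share:
  assumes "d \<ge> (2::nat)"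
  shows "real d / sqrt 2 \<le> low_share d"
proof -
  have "(real d / sqrt 2 + sqrt 2)^2 = (real d)^2 / 2 + 2 * real d + 2"
    by (simp add: power2_eq_square field_simps)
  also have "\<dots> \<le> 4 + (real d)^2"
    using zero_le_power2[of "real d - 2"] by (simp add: power2_eq_square field_simps)
  finally have "real d / sqrt 2 + sqrt 2 \<le> sqrt (4 + (real d)^2)"
    by (intro real_le_rsqrt)
  then show ?thesis unfolding low_share_def using assms by simp
qed

text \<open>They are exact on edges of the
  tadpole: a vertex of degree \<open>d\<close> and a vertex of degree 2 share \<open>sqrt (d\<^sup>2 + 4)\<close> as
  \<open>low_share d + sqrt 2\<close>, and two vertices of degree at least 3 share
  \<open>sqrt (p\<^sup>2 + q\<^sup>2)\<close> as \<open>(p + q) / sqrt 2\<close>.\<close>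

lemma edge_share_sum_le_ordered:
  assumes "1 \<le> p" "p \<le> q" "2 \<le> q"
  shows "edge_share p q + edge_share q p \<le> sqrt ((real p)^2 + (real q)^2)"
proof -
  consider "p = 1" | "p = 2" | "3 \<le> p" using assms(1) by linarith
  then show ?thesis
  proof cases
    case 1
    then have "edge_share p q + edge_share q p = sqrt 5 - sqrt 2 + (sqrt (4 + (real q)^2) - sqrt 2)"
      unfolding edge_share_def low_share_def using assms by simp
    also have "\<dots> \<le> sqrt (1 + (real q)^2)"
      using sqrt_4_plus_sq_minus_sqrt_1_plus_sq_le[OF assms(3)] by simp
    finally show ?thesis using 1 by simp
  next
    case 2
    then have "edge_share p q + edge_share q p = sqrt 2 + (sqrt (4 + (real q)^2) - sqrt 2)"
      unfolding edge_share_def low_share_def using assms sqrt_8 by simp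
    then show ?thesis using 2 by (simp add: add.commute)
  next
    case 3
    then have "edge_share p q + edge_share q p = (real p + real q) / sqrt 2"
      unfolding edge_share_def using assms by (simp add: add_divide_distrib)
    also have "\<dots> \<le> sqrt ((real p)^2 + (real q)^2)"
    proof (rule real_le_rsqrt)
      have "((real p + real q) / sqrt 2)^2 = (real p + real q)^2 / 2" by (simp add: power_divide)
      also have "\<dots> \<le> (real p)^2 + (real q)^2"
        using zero_le_power2[of "real p - real q"] by (simp add: power2_eq_square field_simps)
      finally show "((real p + real q) / sqrt 2)^2 \<le> (real p)^2 + (real q)^2" .
    qed
    finally show ?thesis .
  qed
qed

lemma edge_share_sum_le:
  assumes "1 \<le> p" "1 \<le> q" "\<not> (p = 1 \<and> q = 1)"
  shows "edge_share p q + edge_share q p \<le> sqrt ((real p)^2 + (real q)^2)"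
proof (cases "p \<le> q")
  case True
  then have "2 \<le> q" using assms by auto
  then show ?thesis using edge_share_sum_le_ordered True assms by simp
next
  case False
  then have "2 \<le> p" using assms by auto
  then show ?thesis using edge_share_sum_le_ordered[of q p] False assms by (simp add: add.commute)
qed

lemma edge_share_ge_high: "p \<ge> 3 \<Longrightarrow> real p / sqrt 2 \<le> edge_share p q"
  unfolding edge_share_def using high_share_le_low_share[of p] by auto

lemma edge_share_low: "p < 3 \<or> q < 3 \<Longrightarrow> edge_share p q = low_share p"
  unfolding edge_share_def by auto

lemma surplus_weight_pos: "surplus_weight > 0"
proof -
  have "0.75 < sqrt 2" by (rule real_less_rsqrt) (simp add: power2_eq_square)
  then show ?thesis unfolding surplus_weight_def using sqrt_bounds by simp
qed

lemma high_excess_bound_pos: "high_excess_bound > 0"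
  unfolding high_excess_bound_def using sqrt_bounds by simp

lemma tadpole_excess_less_twice_high_excess_bound: "tadpole_excess < 2 * high_excess_bound"
proof -
  have "(sqrt 5 + 7 * sqrt 2)^2 = 103 + 14 * (sqrt 5 * sqrt 2)"
    by (simp add: power2_eq_square algebra_simps)
  also have "sqrt 5 * sqrt 2 = sqrt 10" by (simp add: real_sqrt_mult[symmetric])
  finally have "(3 * sqrt 13)^2 < (sqrt 5 + 7 * sqrt 2)^2"
    using sqrt_bounds(5) by (simp add: power_mult_distrib)
  then have "3 * sqrt 13 < sqrt 5 + 7 * sqrt 2"
    by (rule power_less_imp_less_base) simp
  then show ?thesis unfolding tadpole_excess_def high_excess_bound_def by simp
qed

lemma high_degree_excess_ge:
  assumes "d \<ge> (3::nat)"
  shows "real d * (real d / sqrt 2) - surplus_weight * (real d - 2) - 2 * sqrt 2 \<ge> high_excess_bound"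
proof -
  have "real d * (real d / sqrt 2) = (real d)^2 * sqrt 2 / 2"
    by (simp add: power2_eq_square field_simps)
  moreover have "surplus_weight * (real d - 2) \<le> 3 * sqrt 2 * (real d - 2) - sqrt 5"
    using assms unfolding surplus_weight_def by (simp add: algebra_simps)
  moreover have "(real d)^2 * sqrt 2 / 2 - 3 * sqrt 2 * (real d - 2) - 2 * sqrt 2 \<ge> - sqrt 2 / 2"
  proof -
    have "(real d)^2 / 2 - 3 * (real d - 2) - 2 \<ge> - 1 / 2"
      using zero_le_power2[of "real d - 3"] by (simp add: power2_eq_square field_simps)
    then have "sqrt 2 * ((real d)^2 / 2 - 3 * (real d - 2) - 2) \<ge> sqrt 2 * (- 1 / 2)"
      by (intro mult_left_mono) auto
    then show ?thesis by (simp add: algebra_simps)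
  qed
  ultimately show ?thesis unfolding high_excess_bound_def by linarith
qed

lemma low_neighbours_excess_3:
  "3 * low_share 3 - surplus_weight * (3 - 2) - 2 * sqrt 2 = tadpole_excess"
  unfolding low_share_def surplus_weight_def tadpole_excess_def by simp

lemma low_neighbours_excess_ge_4:
  assumes "d \<ge> (4::nat)"
  shows "real d * low_share d - surplus_weight * (real d - 2) - 2 * sqrt 2 > tadpole_excess"
proof -
  have "real d \<le> sqrt (4 + (real d)^2)" by (rule real_le_rsqrt) simp
  then have "low_share d \<ge> real d - sqrt 2" unfolding low_share_def using assms by simp
  then have a: "real d * low_share d \<ge> real d * (real d - sqrt 2)" by (intro mult_left_mono) auto
  define c where "c = sqrt 2 + surplus_weight"
  have "c < 8" unfolding c_def surplus_weight_def using sqrt_bounds by simp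
  then have "(real d - 4) * (real d + 4 - c) \<ge> 0" using assms by (intro mult_nonneg_nonneg) auto
  then have b: "real d * real d - c * real d \<ge> 16 - 4 * c" by (simp add: algebra_simps)
  have "16 - 4 * c + 2 * surplus_weight - 2 * sqrt 2 > tadpole_excess"
    unfolding c_def surplus_weight_def tadpole_excess_def using sqrt_bounds by simp
  then show ?thesis using a b unfolding c_def by (simp add: algebra_simps)
qed

text \<open>In \<open>edge_charge E e x\<close> the second argument of \<open>edge_share\<close> is the degree of the other
  endpoint of \<open>e\<close>.\<close>

definition edge_charge :: "'a set set \<Rightarrow> 'a set \<Rightarrow> 'a \<Rightarrow> real" where
  "edge_charge E e x = edge_share (degree E x) (sum (degree E) e - degree E x)"

definition vertex_charge :: "'a set set \<Rightarrow> 'a \<Rightarrow> real" where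
  "vertex_charge E v = (\<Sum>e\<in>{e\<in>E. v \<in> e}. edge_charge E e v)"

text \<open>The weights are chosen so that vertices of degree 1 and 2 have excess 0.\<close>

definition excess_charge :: "'a set set \<Rightarrow> 'a \<Rightarrow> real" where
  "excess_charge E v = vertex_charge E v - surplus_weight * (real (degree E v) - 2) - 2 * sqrt 2"

lemma edge_charge_doubleton:
  assumes "a \<noteq> b"
  shows "edge_charge E {a, b} a = edge_share (degree E a) (degree E b)"
  unfolding edge_charge_def using assms by simp

lemma sum_vertex_charge_le_sombor:
  assumes s: "simple_graph V E"
    and no_K2: "\<And>a b. {a, b} \<in> E \<Longrightarrow> \<not> (degree E a = 1 \<and> degree E b = 1)"
  shows "(\<Sum>v\<in>V. vertex_charge E v) \<le> sombor E"
proof -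
  have "(\<Sum>v\<in>V. vertex_charge E v) = (\<Sum>e\<in>E. \<Sum>x\<in>e. edge_charge E e x)"
    unfolding vertex_charge_def using sum_edges_endpoints[OF s, of "edge_charge E"] by simp
  also have "\<dots> \<le> (\<Sum>e\<in>E. sqrt (\<Sum>x\<in>e. (real (degree E x))^2))"
  proof (rule sum_mono)
    fix e assume e: "e \<in> E"
    then obtain a b where ab: "a \<noteq> b" "e = {a, b}" using edge_doubleton[OF s] by blast
    have "degree E a \<ge> 1" "degree E b \<ge> 1" using degree_ge1_of_edge[OF s e] ab by simp_all
    then have "edge_share (degree E a) (degree E b) + edge_share (degree E b) (degree E a)
        \<le> sqrt ((real (degree E a))^2 + (real (degree E b))^2)"
      using edge_share_sum_le no_K2 e ab by simp
    then show "(\<Sum>x\<in>e. edge_charge E e x) \<le> sqrt (\<Sum>x\<in>e. (real (degree E x))^2)"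
      using ab edge_charge_doubleton[OF ab(1)] edge_charge_doubleton[of b a] by (simp add: insert_commute)
  qed
  also have "\<dots> = sombor E" unfolding sombor_def ..
  finally show ?thesis .
qed

lemma sombor_lower_bound:
  assumes s: "simple_graph V E"
    and no_K2: "\<And>a b. {a, b} \<in> E \<Longrightarrow> \<not> (degree E a = 1 \<and> degree E b = 1)"
  shows "2 * sqrt 2 * real (card V) + surplus_weight * (2 * real (card E) - 2 * real (card V))
      + (\<Sum>v\<in>V. excess_charge E v) \<le> sombor E"
proof -
  have "(\<Sum>v\<in>V. vertex_charge E v)
      = (\<Sum>v\<in>V. excess_charge E v + surplus_weight * (real (degree E v) - 2) + 2 * sqrt 2)"
    unfolding excess_charge_def by simp
  also have "\<dots> = (\<Sum>v\<in>V. excess_charge E v)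
      + surplus_weight * ((\<Sum>v\<in>V. real (degree E v)) - 2 * real (card V)) + 2 * sqrt 2 * real (card V)"
    by (simp add: sum.distrib sum_subtractf sum_distrib_left algebra_simps)
  finally show ?thesis using sum_vertex_charge_le_sombor[OF s no_K2] handshake[OF s] by simp
qed

lemma edge_charge_other_endpoint:
  assumes s: "simple_graph V E" and e: "e \<in> E" and v: "v \<in> e"
  obtains u where "e = {v, u}" "u \<noteq> v" "edge_charge E e v = edge_share (degree E v) (degree E u)"
proof -
  obtain a b where ab: "a \<noteq> b" "e = {a, b}" using edge_doubleton[OF s e] by blast
  then consider "v = a" | "v = b" using v by blast
  then show ?thesis
  proof cases
    case 1
    then show ?thesis using that ab edge_charge_doubleton[of a b] by simp
  next
    case 2
    then show ?thesis
      using ab edge_charge_doubleton[of b a] by (intro that[of a]) (auto simp: insert_commute)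
  qed
qed

lemma vertex_charge_low:
  assumes s: "simple_graph V E"
    and low: "degree E v < 3 \<or> (\<forall>u. {v, u} \<in> E \<longrightarrow> degree E u < 3)"
  shows "vertex_charge E v = real (degree E v) * low_share (degree E v)"
proof -
  have "vertex_charge E v = (\<Sum>e\<in>{e\<in>E. v \<in> e}. low_share (degree E v))"
    unfolding vertex_charge_def
  proof (intro sum.cong refl)
    fix e assume "e \<in> {e\<in>E. v \<in> e}"
    then obtain u where u: "{v, u} \<in> E" "edge_charge E e v = edge_share (degree E v) (degree E u)"
      using edge_charge_other_endpoint[OF s] by (metis mem_Collect_eq)
    have "degree E v < 3 \<or> degree E u < 3" using low u(1) by blast
    then show "edge_charge E e v = low_share (degree E v)" using u(2) edge_share_low by simp
  qed
  then show ?thesis unfolding degree_def by simp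
qed

lemma vertex_charge_high:
  assumes "degree E v \<ge> 3"
  shows "vertex_charge E v \<ge> real (degree E v) * (real (degree E v) / sqrt 2)"
proof -
  have "(\<Sum>e\<in>{e\<in>E. v \<in> e}. real (degree E v) / sqrt 2) \<le> vertex_charge E v"
    unfolding vertex_charge_def edge_charge_def using assms by (intro sum_mono) (simp add: edge_share_ge_high)
  then show ?thesis unfolding degree_def by simp
qed

lemma excess_charge_low_degree:
  assumes "simple_graph V E" and "degree E v = 1 \<or> degree E v = 2"
  shows "excess_charge E v = 0"
proof -
  have "vertex_charge E v = real (degree E v) * low_share (degree E v)"
    using vertex_charge_low[OF assms(1)] assms(2) by auto
  then show ?thesis using assms(2) low_share_2
    unfolding excess_charge_def low_share_def surplus_weight_def by auto
qed

lemma excess_charge_high_degree: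
  assumes "degree E v \<ge> 3"
  shows "excess_charge E v \<ge> high_excess_bound"
  using vertex_charge_high[OF assms] high_degree_excess_ge[OF assms]
  unfolding excess_charge_def by linarith

lemma excess_charge_nonneg:
  assumes "simple_graph V E" and "degree E v \<ge> 1"
  shows "excess_charge E v \<ge> 0"
proof (cases "degree E v \<ge> 3")
  case True
  then show ?thesis using excess_charge_high_degree high_excess_bound_pos by fastforce
next
  case False
  then have "degree E v = 1 \<or> degree E v = 2" using assms(2) by linarith
  then show ?thesis using excess_charge_low_degree[OF assms(1)] by simp
qed

lemma excess_charge_low_neighbours:
  assumes s: "simple_graph V E" and "\<And>u. {v, u} \<in> E \<Longrightarrow> degree E u < 3"
    and "degree E v \<ge> 3"
  shows "excess_charge E v \<ge> tadpole_excess"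
    and "degree E v \<ge> 4 \<Longrightarrow> excess_charge E v > tadpole_excess"
proof -
  have c: "vertex_charge E v = real (degree E v) * low_share (degree E v)"
    using vertex_charge_low[OF s] assms(2) by blast
  show "degree E v \<ge> 4 \<Longrightarrow> excess_charge E v > tadpole_excess"
    unfolding excess_charge_def c using low_neighbours_excess_ge_4 by simp
  show "excess_charge E v \<ge> tadpole_excess"
  proof (cases "degree E v = 3")
    case True
    then show ?thesis unfolding excess_charge_def c using low_neighbours_excess_3 by simp
  next
    case False
    then have "degree E v \<ge> 4" using assms(3) by simp
    then show ?thesis unfolding excess_charge_def c using low_neighbours_excess_ge_4 by (simp add: less_imp_le)
  qed
qed

section \<open>Graphs with small Sombor index\<close>

lemma exists_degree_ge_3:
  assumes s: "simple_graph V E" and c: "connected_graph V E" and cyc: "is_cycle E xs"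
    and "length xs < card V"
  obtains w where "w \<in> V" "degree E w \<ge> 3"
proof (rule ccontr)
  assume no: "\<not> thesis"
  have "\<forall>x\<in>set xs. degree E x \<le> 2"
  proof
    fix x assume "x \<in> set xs"
    then have "x \<in> V" using cycle_vertices_subset[OF s cyc] by blast
    then show "degree E x \<le> 2" using no that[of x] by linarith
  qed
  then have "V = set xs" using cycle_of_max_degree_2[OF s c cyc] by simp
  then show False using card_set_cycle[OF cyc] assms(4) by simp
qed

text \<open>Two vertices of degree at least 3 would already exceed \<open>tadpole_excess\<close>, while a single
  one whose neighbours have degree at most 2 reaches it.\<close>

lemma small_total_excess_structure:
  assumes s: "simple_graph V E" and deg_pos: "\<forall>v\<in>V. degree E v \<ge> 1"
    and w: "w \<in> V" "degree E w \<ge> 3"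
    and total: "(\<Sum>v\<in>V. excess_charge E v) \<le> tadpole_excess"
  shows "degree E w = 3" and "\<forall>v\<in>V - {w}. degree E v \<le> 2"
    and "(\<Sum>v\<in>V. excess_charge E v) = tadpole_excess"
proof -
  have fV: "finite V" using simple_graph_finite_vertices[OF s] .
  have nonneg: "excess_charge E v \<ge> 0" if "v \<in> V" for v
    using excess_charge_nonneg[OF s] deg_pos that by simp
  have part: "(\<Sum>v\<in>A. excess_charge E v) \<le> tadpole_excess" if "A \<subseteq> V" for A
  proof -
    have "(\<Sum>v\<in>A. excess_charge E v) \<le> (\<Sum>v\<in>V. excess_charge E v)"
      by (rule sum_mono2[OF fV that]) (use nonneg in blast)
    then show ?thesis using total by linarith
  qed
  have others: "degree E v \<le> 2" if "v \<in> V" "v \<noteq> w" for v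
  proof (rule ccontr)
    assume "\<not> degree E v \<le> 2"
    then have "excess_charge E v \<ge> high_excess_bound" by (intro excess_charge_high_degree) simp
    then have "excess_charge E v + excess_charge E w \<ge> 2 * high_excess_bound"
      using excess_charge_high_degree[OF w(2)] by simp
    moreover have "(\<Sum>x\<in>{w, v}. excess_charge E x) \<le> tadpole_excess"
      by (rule part) (use that w in simp)
    ultimately show False using that tadpole_excess_less_twice_high_excess_bound by simp
  qed
  then show "\<forall>v\<in>V - {w}. degree E v \<le> 2" by blast
  have nbrs: "degree E u < 3" if "{w, u} \<in> E" for u
    using others edge_subset_vertices[OF s that] card_edge[OF s that] by fastforce
  have "excess_charge E w \<le> tadpole_excess" using part[of "{w}"] w by simp
  then show "degree E w = 3"
    using excess_charge_low_neighbours(2)[OF s nbrs w(2)] w(2) by fastforce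
  have "excess_charge E w \<ge> tadpole_excess" using excess_charge_low_neighbours(1)[OF s nbrs w(2)] .
  moreover have "(\<Sum>v\<in>V - {w}. excess_charge E v) \<ge> 0" by (rule sum_nonneg) (use nonneg in blast)
  ultimately show "(\<Sum>v\<in>V. excess_charge E v) = tadpole_excess"
    using sum.remove[OF fV w(1), of "excess_charge E"] total by linarith
qed

lemma small_sombor_structure:
  assumes s: "simple_graph V E" and c: "connected_graph V E" and cyc: "is_cycle E xs"
    and long: "length xs < card V"
    and small: "sombor E \<le> 2 * sqrt 2 * real (card V) + tadpole_excess"
  shows "card E = card V" "sombor E = 2 * sqrt 2 * real (card V) + tadpole_excess"
    and "\<exists>w\<in>V. degree E w = 3 \<and> (\<forall>v\<in>V - {w}. degree E v = 1 \<or> degree E v = 2)"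
proof -
  have V3: "3 \<le> card V" using long cyc unfolding is_cycle_def by simp
  have deg_pos: "\<forall>v\<in>V. degree E v \<ge> 1" using degree_pos[OF s c] V3 by simp
  have lower: "2 * sqrt 2 * real (card V) + surplus_weight * (2 * real (card E) - 2 * real (card V))
      + (\<Sum>v\<in>V. excess_charge E v) \<le> sombor E"
    using sombor_lower_bound[OF s] no_isolated_edge[OF s c V3] by blast
  have edges: "card V \<le> card E" using card_vertices_le_card_edges[OF s c cyc] .
  then have "surplus_weight * (2 * real (card E) - 2 * real (card V)) \<ge> 0"
    using surplus_weight_pos by simp
  then have total: "(\<Sum>v\<in>V. excess_charge E v) \<le> tadpole_excess" using lower small by linarith
  obtain w where w: "w \<in> V" "degree E w \<ge> 3" using exists_degree_ge_3[OF s c cyc long] .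
  note excess = small_total_excess_structure[OF s deg_pos w total]
  then have "surplus_weight * (2 * real (card E) - 2 * real (card V)) \<le> 0" using lower small by linarith
  then show "card E = card V" using surplus_weight_pos edges by (simp add: mult_le_0_iff)
  then show "sombor E = 2 * sqrt 2 * real (card V) + tadpole_excess"
    using lower small excess(3) by simp
  have "degree E v = 1 \<or> degree E v = 2" if "v \<in> V - {w}" for v
  proof -
    have "1 \<le> degree E v" "degree E v \<le> 2" using excess(2) deg_pos that by auto
    then show ?thesis by linarith
  qed
  then show "\<exists>w\<in>V. degree E w = 3 \<and> (\<forall>v\<in>V - {w}. degree E v = 1 \<or> degree E v = 2)"
    using w(1) excess(1) by blast
qed

lemma unique_leaf:
  assumes s: "simple_graph V E" and m: "card E = card V" and w: "w \<in> V" "degree E w = 3"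
    and deg12: "\<forall>v\<in>V - {w}. degree E v = 1 \<or> degree E v = 2"
  obtains l where "l \<in> V" "l \<noteq> w" "degree E l = 1" "\<forall>v\<in>V - {w, l}. degree E v = 2"
proof -
  have fV: "finite V" using simple_graph_finite_vertices[OF s] .
  define L where "L = {v\<in>V - {w}. degree E v = 1}"
  have "2 * real (card V) = (\<Sum>v\<in>V. real (degree E v))" using handshake[OF s] m by simp
  also have "\<dots> = 3 + (\<Sum>v\<in>V - {w}. real (degree E v))" using sum.remove[OF fV w(1), of "\<lambda>v. real (degree E v)"] w(2) by simp
  also have "(\<Sum>v\<in>V - {w}. real (degree E v)) = (\<Sum>v\<in>V - {w}. 2 - (if degree E v = 1 then 1 else 0))"
    by (rule sum.cong) (use deg12 in auto)
  also have "\<dots> = 2 * real (card (V - {w})) - real (card L)"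
    unfolding L_def using fV by (simp add: sum_subtractf sum.inter_filter[symmetric])
  moreover have "real (card (V - {w})) = real (card V) - 1"
    using fV w(1) card_Diff_singleton[OF w(1)] card_gt_0_iff[of V] by (auto simp: of_nat_diff)
  ultimately have "card L = 1" by linarith
  then obtain l where "L = {l}" by (rule card_1_singletonE)
  then show ?thesis using that deg12 unfolding L_def by blast
qed

section \<open>Adjacency in the tadpole\<close>

definition tadpole_adj :: "nat \<Rightarrow> nat \<Rightarrow> nat \<Rightarrow> nat \<Rightarrow> bool" where
  "tadpole_adj g N i j \<longleftrightarrow> (Suc i < g \<and> j = Suc i) \<or> (i = g - 1 \<and> j = 0) \<or> (i = 0 \<and> j = g)
     \<or> (g \<le> i \<and> Suc i < N \<and> j = Suc i)"

lemma tadpole_E_iff: "{i, j} \<in> tadpole_E g N \<longleftrightarrow> tadpole_adj g N i j \<or> tadpole_adj g N j i"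
  unfolding tadpole_E_def tadpole_adj_def by (auto simp: doubleton_eq_iff)

lemma tadpole_adj_cycle:
  assumes "g \<ge> 3" "i < g" "j < g"
  shows "tadpole_adj g N i j \<longleftrightarrow> j = Suc i mod g"
proof (cases "Suc i < g")
  case True
  then have "Suc i mod g = Suc i" by simp
  then show ?thesis using assms True unfolding tadpole_adj_def by auto
next
  case False
  then have "Suc i = g" using assms by simp
  then have "Suc i mod g = 0" "i = g - 1" by auto
  then show ?thesis using assms False unfolding tadpole_adj_def by auto
qed

lemma tadpole_E_cycle_iff:
  assumes "g \<ge> 3" "i < g" "j < g"
  shows "{i, j} \<in> tadpole_E g N \<longleftrightarrow> j = Suc i mod g \<or> i = Suc j mod g"
  unfolding tadpole_E_iff using tadpole_adj_cycle[OF assms] tadpole_adj_cycle[OF assms(1,3,2)] by simp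

lemma tadpole_E_pendant_iff:
  assumes "g \<ge> 3" "j < g" "N \<le> Suc g"
  shows "{g, j} \<in> tadpole_E g N \<longleftrightarrow> j = 0"
  unfolding tadpole_E_iff tadpole_adj_def using assms by auto

lemma tadpole_E_last_iff:
  assumes "g \<ge> 3" "N \<ge> g + 2" "i < N - 1"
  shows "{N - 1, i} \<in> tadpole_E g N \<longleftrightarrow> i = N - 2"
  unfolding tadpole_E_iff tadpole_adj_def using assms by auto

lemma singleton_notin_tadpole_E:
  assumes "g \<ge> 3"
  shows "{i} \<notin> tadpole_E g N"
  using tadpole_E_iff[of i i g N] assms unfolding tadpole_adj_def by auto

lemma tadpole_E_truncate:
  assumes "i < N - 1" "j < N - 1"
  shows "{i, j} \<in> tadpole_E g N \<longleftrightarrow> {i, j} \<in> tadpole_E g (N - 1)"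
  unfolding tadpole_E_iff tadpole_adj_def using assms by auto

section \<open>Graphs with one vertex of degree 3 and one leaf\<close>

lemma simple_graph_delete_leaf:
  assumes s: "simple_graph V E" and d: "degree E l = 1" and e: "{l, u} \<in> E"
  shows "simple_graph (V - {l}) (E - {{l, u}})"
  unfolding simple_graph_def
proof (intro conjI ballI)
  show "finite (V - {l})" using simple_graph_finite_vertices[OF s] by simp
  fix e assume e': "e \<in> E - {{l, u}}"
  then obtain a b where ab: "a \<noteq> b" "a \<in> V" "b \<in> V" "e = {a, b}" using edge_doubleton[OF s] by blast
  have "l \<notin> e"
  proof
    assume "l \<in> e"
    then obtain x where x: "e = {l, x}" using ab by (auto simp: insert_commute)
    then have "x = u" using e' leaf_edge_iff[OF s d e, of x] by simp
    then show False using e' x by simp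
  qed
  then show "\<exists>a b. a \<noteq> b \<and> a \<in> V - {l} \<and> b \<in> V - {l} \<and> e = {a, b}" using ab by blast
qed

lemma degree_delete_edge:
  assumes s: "simple_graph V E" and e: "{l, u} \<in> E"
  shows "degree (E - {{l, u}}) x = (if x \<in> {l, u} then degree E x - 1 else degree E x)"
proof -
  have eq: "{e\<in>E - {{l, u}}. x \<in> e} = {e\<in>E. x \<in> e} - {{l, u}}" by blast
  have f: "finite {e\<in>E. x \<in> e}" using simple_graph_finite_edges[OF s] by simp
  show ?thesis unfolding degree_def eq using f e by (auto simp: card_Diff_singleton)
qed

lemma connected_graph_delete_leaf:
  assumes s: "simple_graph V E" and c: "connected_graph V E" and d: "degree E l = 1"
    and e: "{l, u} \<in> E" and ul: "u \<noteq> l" and uV: "u \<in> V"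
  shows "connected_graph (V - {l}) (E - {{l, u}})"
  unfolding connected_graph_def
proof (intro conjI ballI)
  show "V - {l} \<noteq> {}" using ul uV by blast
  fix x y assume x: "x \<in> V - {l}" and y: "y \<in> V - {l}"
  define h where "h = (\<lambda>z. if z = l then u else z)"
  have st: "(adj (E - {{l, u}}))\<^sup>*\<^sup>* (h a) (h b)" if "adj E a b" for a b
  proof -
    consider "a = l" | "b = l" | "a \<noteq> l \<and> b \<noteq> l" by blast
    then show ?thesis
    proof cases
      case 1
      then have "b = u" using leaf_adj_unique[OF s d e] that by simp
      then show ?thesis using 1 ul unfolding h_def by simp
    next
      case 2
      then have "a = u" using leaf_adj_unique[OF s d e] adj_sym[OF that] by simp
      then show ?thesis using 2 ul unfolding h_def by simp
    next
      case 3
      then have "{a, b} \<noteq> {l, u}" by (auto simp: doubleton_eq_iff)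
      then have "adj (E - {{l, u}}) a b" using that unfolding adj_def by simp
      then show ?thesis using 3 unfolding h_def by simp
    qed
  qed
  have "(adj E)\<^sup>*\<^sup>* x y" using c x y unfolding connected_graph_def by blast
  then have "(adj (E - {{l, u}}))\<^sup>*\<^sup>* (h x) (h y)" by (rule rtranclp_map[rotated]) (rule st)
  then show "(adj (E - {{l, u}}))\<^sup>*\<^sup>* x y" using x y unfolding h_def by simp
qed

lemma is_cycle_delete_leaf:
  assumes s: "simple_graph V E" and d: "degree E l = 1" and e: "{l, u} \<in> E"
    and c: "is_cycle E ys"
  shows "is_cycle (E - {{l, u}}) ys" "l \<notin> set ys"
proof -
  show nl: "l \<notin> set ys" using cycle_vertex_degree_ge2[OF simple_graph_finite_edges[OF s] c] d by force
  show "is_cycle (E - {{l, u}}) ys"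
    unfolding is_cycle_def
  proof (intro conjI allI impI)
    show "length ys \<ge> 3" "distinct ys" using c unfolding is_cycle_def by auto
    fix i assume i: "i < length ys"
    have "{ys ! i, ys ! ((i + 1) mod length ys)} \<in> E" using c i unfolding is_cycle_def by blast
    moreover have "ys ! i \<noteq> l" using nl i by (metis nth_mem)
    moreover have "ys ! ((i + 1) mod length ys) \<noteq> l" using nl i
      by (metis nth_mem mod_less_divisor gr_implies_not0 neq0_conv)
    ultimately show "{ys ! i, ys ! ((i + 1) mod length ys)} \<in> E - {{l, u}}"
      by (auto simp: doubleton_eq_iff)
  qed
qed

lemma extend_bij_by_leaf:
  assumes h': "bij_betw h' {0..<n} (V - {l})" and l: "l \<in> V" and k: "k < n"
    and E: "E = insert {l, h' k} E'" and l_E': "\<forall>e\<in>E'. l \<notin> e"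
    and adj': "\<forall>i<n. \<forall>j<n. {h' i, h' j} \<in> E' \<longleftrightarrow> {i, j} \<in> T"
    and T_n: "\<forall>j<n. {n, j} \<in> T \<longleftrightarrow> j = k" and T_loop: "{n} \<notin> T"
  shows "bij_betw (h'(n := l)) {0..<Suc n} V"
    and "\<forall>i<Suc n. \<forall>j<Suc n. {(h'(n := l)) i, (h'(n := l)) j} \<in> E \<longleftrightarrow> {i, j} \<in> T"
proof -
  let ?h = "h'(n := l)"
  have h'V: "h' i \<in> V - {l}" if "i < n" for i using h' that unfolding bij_betw_def by auto
  have "bij_betw ?h {0..<n} (V - {l})" using h' bij_betw_cong[of "{0..<n}" ?h h'] by simp
  then have "bij_betw ?h ({0..<n} \<union> {n}) ((V - {l}) \<union> {?h n})"
    by (rule notIn_Un_bij_betw[rotated 2]) simp_all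
  moreover have "{0..<n} \<union> {n} = {0..<Suc n}" "(V - {l}) \<union> {?h n} = V" using l by auto
  ultimately show "bij_betw ?h {0..<Suc n} V" by simp
  have inj: "h' i = h' j \<longleftrightarrow> i = j" if "i < n" "j < n" for i j
    using h' that unfolding bij_betw_def inj_on_def by auto
  have l_edge: "{l, h' j} \<in> E \<longleftrightarrow> {n, j} \<in> T" if "j < n" for j
    using l_E' h'V[OF that] inj[OF that k] T_n that unfolding E by (auto simp: doubleton_eq_iff)
  have old_edge: "{h' i, h' j} \<in> E \<longleftrightarrow> {i, j} \<in> T" if "i < n" "j < n" for i j
    using adj' h'V[OF that(1)] h'V[OF that(2)] that unfolding E by (auto simp: doubleton_eq_iff)
  have loop: "{l} \<notin> E" using l_E' h'V[OF k] T_loop unfolding E by auto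
  show "\<forall>i<Suc n. \<forall>j<Suc n. {?h i, ?h j} \<in> E \<longleftrightarrow> {i, j} \<in> T"
  proof (intro allI impI)
    fix i j assume "i < Suc n" "j < Suc n"
    then consider "i < n" "j < n" | "i < n" "j = n" | "i = n" "j < n" | "i = n" "j = n" by linarith
    then show "{?h i, ?h j} \<in> E \<longleftrightarrow> {i, j} \<in> T"
      by cases (use old_edge l_edge loop T_loop in \<open>auto simp: insert_commute\<close>)
  qed
qed

lemma cycle_labelling:
  assumes cyc: "is_cycle E xs" and w: "w \<in> set xs" and g: "g = length xs"
  obtains zs where "bij_betw (\<lambda>i. zs ! i) {0..<g} (set xs)" "zs ! 0 = w"
    "\<forall>i<g. \<forall>j<g. {zs ! i, zs ! j} \<in> cycle_edges xs \<longleftrightarrow> {i, j} \<in> tadpole_E g N"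
proof -
  obtain k where k: "k < g" "xs ! k = w" using w g by (metis in_set_conv_nth)
  have g3: "g \<ge> 3" and dxs: "distinct xs" using cyc g unfolding is_cycle_def by auto
  define zs where "zs = rotate k xs"
  have zd: "distinct zs" and zlen: "length zs = g" and zset: "set zs = set xs"
    unfolding zs_def using dxs g by simp_all
  have "cycle_edges xs = cycle_edges zs"
    unfolding zs_def using cycle_edges_rotate g3 g by (metis list.size(3) not_numeral_le_zero)
  show ?thesis
  proof (rule that[of zs])
    show "zs ! 0 = w" unfolding zs_def by (subst nth_rotate) (use k g3 g in auto)
    show "bij_betw (\<lambda>i. zs ! i) {0..<g} (set xs)"
      by (rule bij_betw_nth) (use zd zlen zset in auto)
    show "\<forall>i<g. \<forall>j<g. {zs ! i, zs ! j} \<in> cycle_edges xs \<longleftrightarrow> {i, j} \<in> tadpole_E g N"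
      using \<open>cycle_edges xs = cycle_edges zs\<close> cycle_edges_nth_iff[OF zd] tadpole_E_cycle_iff[OF g3] zlen
      by simp
  qed
qed

definition tadpole_labelling :: "'a set \<Rightarrow> 'a set set \<Rightarrow> nat \<Rightarrow> nat \<Rightarrow> (nat \<Rightarrow> 'a) \<Rightarrow> bool" where
  "tadpole_labelling V E g n h \<longleftrightarrow> bij_betw h {0..<n} V \<and>
     (\<forall>i<n. \<forall>j<n. {h i, h j} \<in> E \<longleftrightarrow> {i, j} \<in> tadpole_E g n)"

lemma tadpole_labelling_leaf_at_cycle:
  assumes s: "simple_graph V E" and l: "l \<in> V" and "{l, u} \<in> E"
    and cyc: "is_cycle (E - {{l, u}}) xs" and V: "V - {l} = set xs" and E: "E - {{l, u}} = cycle_edges xs"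
    and u: "u \<in> set xs"
  shows "\<exists>h. tadpole_labelling V E (length xs) (Suc (length xs)) h \<and> h (length xs) = l"
proof -
  let ?g = "length xs" and ?T = "tadpole_E (length xs) (Suc (length xs))"
  have g3: "?g \<ge> 3" using cyc unfolding is_cycle_def by simp
  obtain zs where zs: "bij_betw (\<lambda>i. zs ! i) {0..<?g} (set xs)" "zs ! 0 = u"
    "\<forall>i<?g. \<forall>j<?g. {zs ! i, zs ! j} \<in> cycle_edges xs \<longleftrightarrow> {i, j} \<in> ?T"
    using cycle_labelling[OF cyc u refl] by blast
  have E_ins: "E = insert {l, zs ! 0} (E - {{l, u}})" using zs(2) assms(3) by blast
  have "e \<subseteq> set xs" if "e \<in> cycle_edges xs" for e
    using that g3 unfolding cycle_edges_def by (auto intro!: nth_mem mod_less_divisor)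
  then have l_E': "\<forall>e\<in>E - {{l, u}}. l \<notin> e" using E V by blast
  have pendant: "\<forall>j<?g. {?g, j} \<in> ?T \<longleftrightarrow> j = 0" using tadpole_E_pendant_iff[OF g3] by simp
  have "0 < ?g" using g3 by linarith
  note ext = extend_bij_by_leaf[OF zs(1)[folded V] l this E_ins l_E' zs(3)[folded E] pendant
      singleton_notin_tadpole_E[OF g3]]
  show ?thesis using ext unfolding tadpole_labelling_def by (intro exI[of _ "(\<lambda>i. zs ! i)(?g := l)"]) simp
qed

lemma tadpole_labelling_add_leaf:
  assumes s: "simple_graph V E" and l: "l \<in> V" and dl: "degree E l = 1" and u: "{l, u} \<in> E"
    and lab: "tadpole_labelling (V - {l}) (E - {{l, u}}) g n h" and hu: "h (n - 1) = u"
    and g: "3 \<le> g" "g < n"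
  shows "tadpole_labelling V E g (Suc n) (h(n := l))"
proof -
  let ?T = "tadpole_E g (Suc n)"
  have s': "simple_graph (V - {l}) (E - {{l, u}})" by (rule simple_graph_delete_leaf[OF s dl u])
  have h: "bij_betw h {0..<n} (V - {l})" using lab unfolding tadpole_labelling_def by blast
  have E_ins: "E = insert {l, h (n - 1)} (E - {{l, u}})" using hu u by blast
  have l_E': "\<forall>e\<in>E - {{l, u}}. l \<notin> e" using edge_subset_vertices[OF s'] by blast
  have adj: "\<forall>i<n. \<forall>j<n. {h i, h j} \<in> E - {{l, u}} \<longleftrightarrow> {i, j} \<in> ?T"
    using lab tadpole_E_truncate[of _ "Suc n" _ g] unfolding tadpole_labelling_def by simp
  have last: "\<forall>j<n. {n, j} \<in> ?T \<longleftrightarrow> j = n - 1" using tadpole_E_last_iff[OF g(1), of "Suc n"] g by simp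
  have "n - 1 < n" using g by linarith
  note ext = extend_bij_by_leaf[OF h l this E_ins l_E' adj last singleton_notin_tadpole_E[OF g(1)]]
  then show ?thesis unfolding tadpole_labelling_def by blast
qed

text \<open>Induction on the order: deleting the leaf leaves a cycle when the leaf hangs at the
  vertex of degree 3, and a smaller graph of the same kind, whose leaf is the old leaf's
  neighbour, otherwise.\<close>

lemma tadpole_structure:
  assumes "simple_graph V E" "connected_graph V E" "is_cycle E xs" "card V = n"
    "length xs < n" "w \<in> V" "degree E w = 3" "l \<in> V" "degree E l = 1"
    "\<forall>v\<in>V - {w, l}. degree E v = 2"
  shows "(\<exists>h. tadpole_labelling V E (length xs) n h \<and> h (n - 1) = l) \<and>
    (\<forall>ys. is_cycle E ys \<longrightarrow> set ys = set xs \<and> cycle_edges ys = cycle_edges xs)"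
  using assms
proof (induction n arbitrary: V E l)
  case 0 then show ?case by simp
next
  case (Suc n)
  note s = Suc.prems(1) and cn = Suc.prems(2) and c = Suc.prems(3) and cV = Suc.prems(4)
    and long = Suc.prems(5) and wV = Suc.prems(6) and dw = Suc.prems(7) and lV = Suc.prems(8)
    and dl = Suc.prems(9) and dv = Suc.prems(10)
  obtain u where u: "{l, u} \<in> E" "u \<noteq> l" "u \<in> V"
    using degree_ge1_obtain_neighbour[OF s] dl by force
  define E' where "E' = E - {{l, u}}"
  define V' where "V' = V - {l}"
  have s': "simple_graph V' E'" unfolding V'_def E'_def by (rule simple_graph_delete_leaf[OF s dl u(1)])
  have cn': "connected_graph V' E'" unfolding V'_def E'_def by (rule connected_graph_delete_leaf[OF s cn dl u])
  have cyc': "is_cycle E' ys" if "is_cycle E ys" for ys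
    unfolding E'_def using is_cycle_delete_leaf[OF s dl u(1) that] by auto
  have c': "is_cycle E' xs" using cyc'[OF c] .
  have cV': "card V' = n" unfolding V'_def using cV lV simple_graph_finite_vertices[OF s] by simp
  have deg': "degree E' x = (if x \<in> {l, u} then degree E x - 1 else degree E x)" for x
    unfolding E'_def by (rule degree_delete_edge[OF s u(1)])
  have wl: "w \<noteq> l" using dw dl by auto
  show ?case
  proof (cases "u = w")
    case True
    have deg2: "\<forall>x\<in>V'. degree E' x \<le> 2"
    proof
      fix x assume "x \<in> V'"
      then show "degree E' x \<le> 2" using deg'[of x] dw dv True unfolding V'_def by (cases "x = w") auto
    qed
    have cycle_graph: "set ys = V' \<and> cycle_edges ys = E'" if "is_cycle E' ys" for ys
      using cycle_of_max_degree_2[OF s' cn' that] deg2 cycle_vertices_subset[OF s' that] by auto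
    have gn: "length xs = n" using card_set_cycle[OF c] cycle_graph[OF c'] cV' by simp
    have "\<exists>h. tadpole_labelling V E (length xs) (Suc n) h \<and> h (Suc n - 1) = l"
      using tadpole_labelling_leaf_at_cycle[OF s lV u(1) c'[unfolded E'_def]] cycle_graph[OF c'] gn
        True wV wl unfolding V'_def E'_def by simp
    then show ?thesis using cycle_graph cyc' c' by metis
  next
    case False
    have dw': "degree E' w = 3" and du': "degree E' u = 1"
      and dv': "\<forall>v\<in>V' - {w, u}. degree E' v = 2"
      using deg' dw dv u False wl unfolding V'_def by auto
    have long': "length xs < n"
    proof (rule ccontr)
      assume "\<not> length xs < n"
      then have "set xs = V'" using cycle_vertices_subset[OF s' c'] card_set_cycle[OF c] cV'
        by (metis card_mono card_subset_eq le_antisym not_less simple_graph_finite_vertices[OF s'])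
      then show False using cycle_vertex_degree_ge2[OF simple_graph_finite_edges[OF s'] c'] du' u lV
        unfolding V'_def by fastforce
    qed
    have wV': "w \<in> V'" and uV': "u \<in> V'" unfolding V'_def using wV wl u by auto
    note IH = Suc.IH[OF s' cn' c' cV' long' wV' dw' uV' du' dv']
    then obtain h where "tadpole_labelling V' E' (length xs) n h" "h (n - 1) = u" by blast
    then have "tadpole_labelling V E (length xs) (Suc n) (h(n := l))"
      using tadpole_labelling_add_leaf[OF s lV dl u(1)] long' c unfolding V'_def E'_def is_cycle_def
      by blast
    moreover have "(h(n := l)) (Suc n - 1) = l" by simp
    ultimately show ?thesis using IH cyc' by blast
  qed
qed

section \<open>Degrees, connectivity and Sombor index of the tadpole\<close>

context
  fixes g n :: nat
  assumes g3: "g \<ge> 3" and ng: "n \<ge> g + 2"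
begin

lemma simple_graph_tadpole: "simple_graph {0..<n} (tadpole_E g n)"
  unfolding simple_graph_def
proof (intro conjI ballI)
  show "finite {0..<n}" by simp
  fix e assume e: "e \<in> tadpole_E g n"
  have "\<exists>a b. e = {a, b}" using e unfolding tadpole_E_def by blast
  then obtain a b where ab: "e = {a, b}" by blast
  then have "tadpole_adj g n a b \<or> tadpole_adj g n b a" using e tadpole_E_iff by simp
  then have "a \<noteq> b \<and> a \<in> {0..<n} \<and> b \<in> {0..<n}" using g3 ng unfolding tadpole_adj_def by auto
  then show "\<exists>a b. a \<noteq> b \<and> a \<in> {0..<n} \<and> b \<in> {0..<n} \<and> e = {a, b}" using ab by blast
qed

lemma degree_tadpole: "i < n \<Longrightarrow> degree (tadpole_E g n) i = card {j. j < n \<and> (tadpole_adj g n i j \<or> tadpole_adj g n j i)}"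
  using degree_eq_card_neighbours[OF simple_graph_tadpole, of i] unfolding tadpole_E_iff by simp

lemma degree_tadpole_0: "degree (tadpole_E g n) 0 = 3"
proof -
  have "{j. j < n \<and> (tadpole_adj g n 0 j \<or> tadpole_adj g n j 0)} = {1, g - 1, g}"
    using g3 ng unfolding tadpole_adj_def by auto
  then show ?thesis using degree_tadpole[of 0] g3 ng by simp
qed

lemma degree_tadpole_last: "degree (tadpole_E g n) (n - 1) = 1"
proof -
  have "{j. j < n \<and> (tadpole_adj g n (n - 1) j \<or> tadpole_adj g n j (n - 1))} = {n - 2}"
    using g3 ng unfolding tadpole_adj_def by auto
  then show ?thesis using degree_tadpole[of "n - 1"] g3 ng by simp
qed

lemma degree_tadpole_middle:
  assumes "0 < i" "i < n - 1"
  shows "degree (tadpole_E g n) i = 2"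
proof -
  consider "i < g - 1" | "i = g - 1" | "i = g" | "g < i" by linarith
  then show ?thesis
  proof cases
    case 1
    then have "{j. j < n \<and> (tadpole_adj g n i j \<or> tadpole_adj g n j i)} = {i - 1, i + 1}"
      using g3 ng assms unfolding tadpole_adj_def by auto
    then show ?thesis using degree_tadpole[of i] assms by simp
  next
    case 2
    then have "{j. j < n \<and> (tadpole_adj g n i j \<or> tadpole_adj g n j i)} = {0, g - 2}"
      using g3 ng assms unfolding tadpole_adj_def by auto
    then show ?thesis using degree_tadpole[of i] assms g3 by simp
  next
    case 3
    then have "{j. j < n \<and> (tadpole_adj g n i j \<or> tadpole_adj g n j i)} = {0, g + 1}"
      using g3 ng assms unfolding tadpole_adj_def by auto
    then show ?thesis using degree_tadpole[of i] assms g3 by simp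
  next
    case 4
    then have "{j. j < n \<and> (tadpole_adj g n i j \<or> tadpole_adj g n j i)} = {i - 1, i + 1}"
      using g3 ng assms unfolding tadpole_adj_def by auto
    then show ?thesis using degree_tadpole[of i] assms by simp
  qed
qed

lemma is_cycle_tadpole: "is_cycle (tadpole_E g n) [0..<g]"
  unfolding is_cycle_def
proof (intro conjI allI impI)
  show "length [0..<g] \<ge> 3" "distinct [0..<g]" using g3 by auto
  fix i assume i: "i < length [0..<g]"
  then have "{i, Suc i mod g} \<in> tadpole_E g n" using tadpole_E_cycle_iff[OF g3, of i "Suc i mod g"] g3 by simp
  then show "{[0..<g] ! i, [0..<g] ! ((i + 1) mod length [0..<g])} \<in> tadpole_E g n"
    using i g3 by simp
qed

lemma connected_graph_tadpole: "connected_graph {0..<n} (tadpole_E g n)"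
proof -
  have step: "adj (tadpole_E g n) i (Suc i)" if "Suc i < n" "i \<noteq> g - 1" for i
    using that unfolding adj_def tadpole_E_iff tadpole_adj_def by auto
  have from_0: "(adj (tadpole_E g n))\<^sup>*\<^sup>* 0 i" if "i < n" for i
    using that
  proof (induction i)
    case (Suc i)
    show ?case
    proof (cases "i = g - 1")
      case True
      then have "adj (tadpole_E g n) 0 (Suc i)" using g3 unfolding adj_def tadpole_E_iff tadpole_adj_def by simp
      then show ?thesis by simp
    next
      case False
      then show ?thesis using Suc step[of i] by (meson Suc_lessD rtranclp.rtrancl_into_rtrancl)
    qed
  qed simp
  show ?thesis unfolding connected_graph_def
  proof (intro conjI ballI)
    show "{0..<n} \<noteq> {}" using ng by simp
    fix u v assume "u \<in> {0..<n}" "v \<in> {0..<n}"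
    then show "(adj (tadpole_E g n))\<^sup>*\<^sup>* u v"
      using from_0 adj_rtranclp_sym by (meson atLeastLessThan_iff rtranclp_trans)
  qed
qed

definition tadpole_edge :: "nat \<Rightarrow> nat set" where
  "tadpole_edge k = (if Suc k < g then {k, Suc k} else if k = g - 1 then {g - 1, 0} else if k = g then {0, g} else {k - 1, k})"

lemma tadpole_E_eq_image: "tadpole_E g n = tadpole_edge ` {0..<n}"
proof
  show "tadpole_E g n \<subseteq> tadpole_edge ` {0..<n}"
  proof
    fix e assume "e \<in> tadpole_E g n"
    then consider (cycle) i where "e = {i, Suc i}" "Suc i < g" | (close) "e = {g - 1, 0}"
      | (attach) "e = {0, g}" | (path) i where "e = {i, Suc i}" "g \<le> i" "Suc i < n"
      unfolding tadpole_E_def by blast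
    then show "e \<in> tadpole_edge ` {0..<n}"
    proof cases
      case (cycle i) then show ?thesis using ng unfolding tadpole_edge_def by (intro image_eqI[of _ _ i]) auto
    next
      case close then show ?thesis using ng g3 unfolding tadpole_edge_def by (intro image_eqI[of _ _ "g - 1"]) auto
    next
      case attach then show ?thesis using ng g3 unfolding tadpole_edge_def by (intro image_eqI[of _ _ g]) auto
    next
      case (path i) then show ?thesis using ng g3 unfolding tadpole_edge_def by (intro image_eqI[of _ _ "Suc i"]) auto
    qed
  qed
  show "tadpole_edge ` {0..<n} \<subseteq> tadpole_E g n"
  proof
    fix e assume "e \<in> tadpole_edge ` {0..<n}"
    then obtain k where k: "k < n" "e = tadpole_edge k" by auto
    consider "Suc k < g" | "k = g - 1" | "k = g" | "g < k" using g3 by linarith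
    then show "e \<in> tadpole_E g n"
    proof cases
      case 4
      then have "e = {k - 1, Suc (k - 1)}" "g \<le> k - 1" "Suc (k - 1) < n"
        using k g3 unfolding tadpole_edge_def by auto
      then show ?thesis unfolding tadpole_E_def by blast
    qed (use k g3 in \<open>auto simp: tadpole_edge_def tadpole_E_def\<close>)
  qed
qed

lemma inj_on_tadpole_edge: "inj_on tadpole_edge {0..<n}"
  unfolding inj_on_def tadpole_edge_def using g3 by (auto simp: doubleton_eq_iff split: if_splits)

lemma sombor_term_tadpole_edge:
  assumes k: "k < n"
  shows "sqrt (\<Sum>x\<in>tadpole_edge k. (real (degree (tadpole_E g n) x))^2) =
     sqrt 8 + (if k = 0 then sqrt 13 - sqrt 8 else 0) + (if k = g - 1 then sqrt 13 - sqrt 8 else 0)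
       + (if k = g then sqrt 13 - sqrt 8 else 0) + (if k = n - 1 then sqrt 5 - sqrt 8 else 0)"
proof -
  consider "k = 0" | "0 < k \<and> Suc k < g" | "k = g - 1" | "k = g" | "g < k \<and> k < n - 1" | "k = n - 1"
    using k g3 by linarith
  then show ?thesis
  proof cases
    case 1
    then have "tadpole_edge k = {0, 1}" unfolding tadpole_edge_def using g3 by simp
    moreover have "degree (tadpole_E g n) 1 = 2" using degree_tadpole_middle[of 1] g3 ng by simp
    moreover have "k \<noteq> g - 1" "k \<noteq> g" "k \<noteq> n - 1" using 1 g3 ng by auto
    ultimately show ?thesis using 1 g3 ng degree_tadpole_0 degree_tadpole_last by simp
  next
    case 2
    then have "tadpole_edge k = {k, Suc k}" unfolding tadpole_edge_def by simp
    moreover have "degree (tadpole_E g n) k = 2" "degree (tadpole_E g n) (Suc k) = 2" using degree_tadpole_middle[of k] degree_tadpole_middle[of "Suc k"] 2 ng by auto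
    moreover have "k \<noteq> 0" "k \<noteq> g - 1" "k \<noteq> g" "k \<noteq> n - 1" using 2 g3 ng by auto
    ultimately show ?thesis using 2 g3 ng by (simp add: power2_eq_square)
  next
    case 3
    then have "tadpole_edge k = {g - 1, 0}" unfolding tadpole_edge_def using g3 by simp
    moreover have "degree (tadpole_E g n) (g - 1) = 2" using degree_tadpole_middle[of "g - 1"] g3 ng by simp
    moreover have "k \<noteq> 0" "k \<noteq> g" "k \<noteq> n - 1" using 3 g3 ng by auto
    ultimately show ?thesis using 3 g3 ng degree_tadpole_0 degree_tadpole_last by (simp add: power2_eq_square)
  next
    case 4
    then have "tadpole_edge k = {0, g}" unfolding tadpole_edge_def using g3 by (auto simp: insert_commute)
    moreover have "degree (tadpole_E g n) g = 2" using degree_tadpole_middle[of g] g3 ng by simp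
    moreover have "k \<noteq> 0" "k \<noteq> g - 1" "k \<noteq> n - 1" using 4 g3 ng by auto
    ultimately show ?thesis using 4 g3 ng degree_tadpole_0 degree_tadpole_last by (simp add: power2_eq_square)
  next
    case 5
    then have "k \<noteq> g - 1" "\<not> Suc k < g" "k \<noteq> g" by auto
    then have "tadpole_edge k = {k - 1, k}" unfolding tadpole_edge_def by simp
    moreover have "degree (tadpole_E g n) (k - 1) = 2" "degree (tadpole_E g n) k = 2" using degree_tadpole_middle[of "k - 1"] degree_tadpole_middle[of k] 5 g3 by auto
    moreover have "k - 1 \<noteq> k" using 5 by linarith
    moreover have "k \<noteq> 0" "k \<noteq> g - 1" "k \<noteq> g" "k \<noteq> n - 1" using 5 g3 ng by auto
    ultimately show ?thesis using 5 g3 ng by (simp add: power2_eq_square)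
  next
    case 6
    then have "k \<noteq> g - 1" "\<not> Suc k < g" "k \<noteq> g" "k - 1 = n - 2" using g3 ng by auto
    then have "tadpole_edge k = {n - 2, n - 1}" unfolding tadpole_edge_def using 6 by simp
    moreover have "degree (tadpole_E g n) (n - 2) = 2" using degree_tadpole_middle[of "n - 2"] g3 ng by simp
    moreover have "n - 2 \<noteq> n - 1" using ng by simp
    moreover have "k \<noteq> 0" "k \<noteq> g - 1" "k \<noteq> g" using 6 g3 ng by auto
    ultimately show ?thesis using 6 g3 ng degree_tadpole_0 degree_tadpole_last by (simp add: power2_eq_square)
  qed
qed

lemma sombor_tadpole: "sombor (tadpole_E g n) = sqrt 5 + 3 * sqrt 13 + 2 * sqrt 2 * (real n - 4)"
proof -
  have "sombor (tadpole_E g n) = (\<Sum>k\<in>{0..<n}. sqrt (\<Sum>x\<in>tadpole_edge k. (real (degree (tadpole_E g n) x))^2))"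
    unfolding sombor_def tadpole_E_eq_image by (simp add: sum.reindex[OF inj_on_tadpole_edge])
  also have "\<dots> = (\<Sum>k\<in>{0..<n}. sqrt 8 + (if k = 0 then sqrt 13 - sqrt 8 else 0) + (if k = g - 1 then sqrt 13 - sqrt 8 else 0)
       + (if k = g then sqrt 13 - sqrt 8 else 0) + (if k = n - 1 then sqrt 5 - sqrt 8 else 0))"
    by (rule sum.cong) (auto simp: sombor_term_tadpole_edge)
  also have "\<dots> = real n * sqrt 8 + 3 * (sqrt 13 - sqrt 8) + (sqrt 5 - sqrt 8)"
    using g3 ng by (simp add: sum.distrib sum.delta)
  also have "\<dots> = sqrt 5 + 3 * sqrt 13 + 2 * sqrt 2 * (real n - 4)"
    unfolding sqrt_8 by (simp add: algebra_simps)
  finally show ?thesis .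
qed

end

section \<open>Copies of a graph under injections\<close>

lemma mem_image_edge_iff:
  assumes s: "simple_graph U T" and inj: "inj_on h U" and x: "x \<in> U" and e: "e \<in> T"
  shows "h x \<in> h ` e \<longleftrightarrow> x \<in> e"
  using inj x edge_subset_vertices[OF s e] by (auto simp: inj_on_def)

lemma inj_on_image_edges:
  assumes s: "simple_graph U T" and inj: "inj_on h U"
  shows "inj_on (image h) T"
proof (rule inj_onI)
  fix e1 e2 assume "e1 \<in> T" "e2 \<in> T" "h ` e1 = h ` e2"
  then show "e1 = e2" using inj_on_image_eq_iff[OF inj] edge_subset_vertices[OF s] by blast
qed

lemma degree_image:
  assumes s: "simple_graph U T" and inj: "inj_on h U" and x: "x \<in> U"
  shows "degree (image h ` T) (h x) = degree T x"
proof -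
  have "{e'\<in>image h ` T. h x \<in> e'} = image h ` {e\<in>T. x \<in> e}"
    using mem_image_edge_iff[OF s inj x] by auto
  moreover have "inj_on (image h) {e\<in>T. x \<in> e}" using inj_on_image_edges[OF s inj] by (rule inj_on_subset) auto
  ultimately show ?thesis unfolding degree_def by (simp add: card_image)
qed

lemma sombor_image:
  assumes s: "simple_graph U T" and inj: "inj_on h U"
  shows "sombor (image h ` T) = sombor T"
proof -
  have "sombor (image h ` T) = (\<Sum>e\<in>T. sqrt (\<Sum>y\<in>h ` e. (real (degree (image h ` T) y))^2))"
    unfolding sombor_def by (simp add: sum.reindex[OF inj_on_image_edges[OF s inj]])
  also have "\<dots> = sombor T" unfolding sombor_def
  proof (rule sum.cong[OF refl])
    fix e assume e: "e \<in> T"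
    have ie: "inj_on h e" using inj edge_subset_vertices[OF s e] by (rule inj_on_subset)
    have "(\<Sum>y\<in>h ` e. (real (degree (image h ` T) y))^2) = (\<Sum>x\<in>e. (real (degree (image h ` T) (h x)))^2)"
      by (simp add: sum.reindex[OF ie])
    also have "\<dots> = (\<Sum>x\<in>e. (real (degree T x))^2)"
      using degree_image[OF s inj] edge_subset_vertices[OF s e] by (intro sum.cong) auto
    finally show "sqrt (\<Sum>y\<in>h ` e. (real (degree (image h ` T) y))^2) = sqrt (\<Sum>x\<in>e. (real (degree T x))^2)"
      by simp
  qed
  finally show ?thesis .
qed

lemma simple_graph_image:
  assumes s: "simple_graph U T" and inj: "inj_on h U"
  shows "simple_graph (h ` U) (image h ` T)"
  unfolding simple_graph_def
proof (intro conjI ballI)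
  show "finite (h ` U)" using simple_graph_finite_vertices[OF s] by simp
  fix e' assume "e' \<in> image h ` T"
  then obtain e where e: "e \<in> T" "e' = h ` e" by auto
  then obtain a b where ab: "a \<noteq> b" "a \<in> U" "b \<in> U" "e = {a, b}" using edge_doubleton[OF s] by blast
  then have "h a \<noteq> h b" using inj by (auto simp: inj_on_def)
  then show "\<exists>a b. a \<noteq> b \<and> a \<in> h ` U \<and> b \<in> h ` U \<and> e' = {a, b}" using ab e by auto
qed

lemma image_edge_iff:
  assumes s: "simple_graph U T" and inj: "inj_on h U" and a: "a \<in> U" and b: "b \<in> U"
  shows "{h a, h b} \<in> image h ` T \<longleftrightarrow> {a, b} \<in> T"
proof -
  have "{h a, h b} = h ` {a, b}" by simp
  moreover have "h ` {a, b} \<in> image h ` T \<longleftrightarrow> {a, b} \<in> T"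
  proof
    assume "h ` {a, b} \<in> image h ` T"
    then obtain e where "e \<in> T" "h ` {a, b} = h ` e" by auto
    moreover have "{a, b} \<subseteq> U" using a b by simp
    ultimately have "{a, b} = e" using inj_on_image_eq_iff[OF inj] edge_subset_vertices[OF s] by blast
    then show "{a, b} \<in> T" using \<open>e \<in> T\<close> by simp
  next
    assume "{a, b} \<in> T"
    then show "h ` {a, b} \<in> image h ` T" by (rule imageI)
  qed
  ultimately show ?thesis by simp
qed

lemma connected_graph_image:
  assumes s: "simple_graph U T" and inj: "inj_on h U" and c: "connected_graph U T"
  shows "connected_graph (h ` U) (image h ` T)"
  unfolding connected_graph_def
proof (intro conjI ballI)
  show "h ` U \<noteq> {}" using c unfolding connected_graph_def by simp
  fix x y assume "x \<in> h ` U" "y \<in> h ` U"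
  then obtain a b where ab: "a \<in> U" "b \<in> U" "x = h a" "y = h b" by auto
  have "(adj T)\<^sup>*\<^sup>* a b" using c ab unfolding connected_graph_def by blast
  moreover have "(adj (image h ` T))\<^sup>*\<^sup>* (h p) (h q)" if "adj T p q" for p q
  proof -
    have "p \<in> U" "q \<in> U" using adj_in_vertices[OF s that] by auto
    then have "adj (image h ` T) (h p) (h q)" using that image_edge_iff[OF s inj] unfolding adj_def by simp
    then show ?thesis by simp
  qed
  ultimately show "(adj (image h ` T))\<^sup>*\<^sup>* x y" unfolding ab using rtranclp_map[of "adj T"] by blast
qed

lemma is_cycle_image:
  assumes s: "simple_graph U T" and inj: "inj_on h U" and c: "is_cycle T xs"
  shows "is_cycle (image h ` T) (map h xs)"
proof -
  have sub: "set xs \<subseteq> U" using cycle_vertices_subset[OF s c] .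
  show ?thesis unfolding is_cycle_def
  proof (intro conjI allI impI)
    show "length (map h xs) \<ge> 3" using c unfolding is_cycle_def by simp
    show "distinct (map h xs)" using c sub inj unfolding is_cycle_def
      by (simp add: distinct_map inj_on_subset)
    fix i assume i: "i < length (map h xs)"
    then have i': "i < length xs" by simp
    have "{xs ! i, xs ! ((i + 1) mod length xs)} \<in> T" using c i' unfolding is_cycle_def by blast
    moreover have m: "(i + 1) mod length xs < length xs" using i' by (intro mod_less_divisor) linarith
    moreover have "xs ! i \<in> U" "xs ! ((i + 1) mod length xs) \<in> U"
      using sub nth_mem[OF i'] nth_mem[OF m] by auto
    ultimately have "{h (xs ! i), h (xs ! ((i + 1) mod length xs))} \<in> image h ` T"
      using image_edge_iff[OF s inj] by simp
    moreover have "map h xs ! ((i + 1) mod length xs) = h (xs ! ((i + 1) mod length xs))"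
      using m by simp
    ultimately show "{map h xs ! i, map h xs ! ((i + 1) mod length (map h xs))} \<in> image h ` T"
      using i' by simp
  qed
qed

lemma exists_tadpole_on:
  fixes V :: "'a set"
  assumes g3: "g \<ge> 3" and ng: "n \<ge> g + 2" and fV: "finite V" and cV: "card V = n"
  shows "\<exists>E'. simple_graph V E' \<and> connected_graph V E' \<and> has_girth E' g
            \<and> sombor E' = sqrt 5 + 3 * sqrt 13 + 2 * sqrt 2 * (real n - 4)"
proof -
  obtain h where h: "bij_betw h {0..<n} V" using ex_bij_betw_nat_finite[OF fV] cV by blast
  have inj: "inj_on h {0..<n}" and img: "h ` {0..<n} = V" using h unfolding bij_betw_def by auto
  define T' where "T' = image h ` tadpole_E g n"
  note ts = simple_graph_tadpole[OF g3 ng]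
  have s': "simple_graph V T'" unfolding T'_def using simple_graph_image[OF ts inj] img by simp
  have c': "connected_graph V T'" unfolding T'_def using connected_graph_image[OF ts inj connected_graph_tadpole[OF g3 ng]] img by simp
  have cy: "is_cycle T' (map h [0..<g])" unfolding T'_def by (rule is_cycle_image[OF ts inj is_cycle_tadpole[OF g3 ng]])
  have so: "sombor T' = sqrt 5 + 3 * sqrt 13 + 2 * sqrt 2 * (real n - 4)"
    unfolding T'_def using sombor_image[OF ts inj] sombor_tadpole[OF g3 ng] by simp
  have dg: "degree T' (h i) = degree (tadpole_E g n) i" if "i < n" for i
    unfolding T'_def using degree_image[OF ts inj] that by simp
  have w: "h 0 \<in> V" "h (n - 1) \<in> V" using img ng by auto
  have d0: "degree T' (h 0) = 3" using dg[of 0] degree_tadpole_0[OF g3 ng] ng by simp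
  have dl: "degree T' (h (n - 1)) = 1" using dg[of "n - 1"] degree_tadpole_last[OF g3 ng] ng by simp
  have dv: "\<forall>v\<in>V - {h 0, h (n - 1)}. degree T' v = 2"
  proof
    fix v assume v: "v \<in> V - {h 0, h (n - 1)}"
    then obtain i where i: "i < n" "v = h i" using img by auto
    then have "h i \<noteq> h 0" "h i \<noteq> h (n - 1)" using v by auto
    then have "i \<noteq> 0" "i \<noteq> n - 1" by metis+
    then have "0 < i" "i < n - 1" using i(1) by linarith+
    then show "degree T' v = 2" using dg i degree_tadpole_middle[OF g3 ng] by simp
  qed
  have st: "\<forall>ys. is_cycle T' ys \<longrightarrow> set ys = set (map h [0..<g]) \<and> cycle_edges ys = cycle_edges (map h [0..<g])"
    using tadpole_structure[OF s' c' cy cV _ w(1) d0 w(2) dl dv] ng by simp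
  have gi: "has_girth T' g" unfolding has_girth_def
  proof (intro conjI allI impI)
    show "\<exists>xs. is_cycle T' xs \<and> length xs = g" using cy by (intro exI[of _ "map h [0..<g]"]) simp
    fix ys assume ys: "is_cycle T' ys"
    have "length ys = card (set ys)" using card_set_cycle[OF ys] by simp
    also have "\<dots> = card (set (map h [0..<g]))" using st ys by simp
    also have "\<dots> = g" using card_set_cycle[OF cy] by simp
    finally show "g \<le> length ys" by simp
  qed
  show ?thesis using s' c' gi so by blast
qed

lemma graph_iso_of_bij_betw:
  assumes h: "bij_betw h A V" and adj: "\<forall>i\<in>A. \<forall>j\<in>A. {h i, h j} \<in> E \<longleftrightarrow> {i, j} \<in> T"
  shows "graph_iso V E A T"
  unfolding graph_iso_def
proof (intro exI[of _ "inv_into A h"] conjI ballI)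
  show "bij_betw (inv_into A h) V A" by (rule bij_betw_inv_into[OF h])
  fix u v assume "u \<in> V" "v \<in> V"
  then have "u \<in> h ` A" "v \<in> h ` A" using h unfolding bij_betw_def by auto
  then show "{u, v} \<in> E \<longleftrightarrow> {inv_into A h u, inv_into A h v} \<in> T"
    using adj inv_into_into[of _ h A] f_inv_into_f[of _ h A] by metis
qed

lemma unicyclic_of_unique_cycle:
  assumes "connected_graph V E" "is_cycle E xs"
    and "\<forall>ys. is_cycle E ys \<longrightarrow> cycle_edges ys = cycle_edges xs"
  shows "unicyclic V E"
proof -
  have "{cycle_edges ys | ys. is_cycle E ys} = {cycle_edges xs}" using assms(2,3) by blast
  then show ?thesis unfolding unicyclic_def using assms(1) by simp
qed

theorem theorem2p3:
  fixes V :: "'a set" and E :: "'a set set" and g n :: nat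
  assumes "g \<ge> 3" and "n \<ge> g + 2"
    and "simple_graph V E" and "card V = n" and "connected_graph V E" and "has_girth E g"
    and "\<forall>(V' :: 'a set) E'. simple_graph V' E' \<and> card V' = n \<and> connected_graph V' E'
            \<and> has_girth E' g \<longrightarrow> sombor E \<le> sombor E'"
  shows "unicyclic V E \<and> graph_iso V E (tadpole_V n) (tadpole_E g n)
         \<and> sombor E = sqrt 5 + 3 * sqrt 13 + 2 * sqrt 2 * (real n - 4)"
proof -
  note s = assms(3) and cV = assms(4) and cn = assms(5)
  obtain xs where xs: "is_cycle E xs" "length xs = g" using assms(6) unfolding has_girth_def by blast
  have long: "length xs < card V" using xs(2) cV assms(2) by simp
  have tadpole_value: "sqrt 5 + 3 * sqrt 13 + 2 * sqrt 2 * (real n - 4) = 2 * sqrt 2 * real n + tadpole_excess"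
    unfolding tadpole_excess_def by (simp add: algebra_simps)
  obtain E' where "simple_graph V E'" "connected_graph V E'" "has_girth E' g"
    "sombor E' = sqrt 5 + 3 * sqrt 13 + 2 * sqrt 2 * (real n - 4)"
    using exists_tadpole_on[OF assms(1,2) simple_graph_finite_vertices[OF s] cV] by blast
  then have "sombor E \<le> 2 * sqrt 2 * real (card V) + tadpole_excess"
    using assms(7) cV tadpole_value by fastforce
  note small = small_sombor_structure[OF s cn xs(1) long this]
  obtain w where w: "w \<in> V" "degree E w = 3" "\<forall>v\<in>V - {w}. degree E v = 1 \<or> degree E v = 2"
    using small(3) by blast
  obtain l where l: "l \<in> V" "degree E l = 1" "\<forall>v\<in>V - {w, l}. degree E v = 2"
    using unique_leaf[OF s small(1) w] by blast
  obtain h where h: "tadpole_labelling V E g n h"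
    and cycles: "\<forall>ys. is_cycle E ys \<longrightarrow> set ys = set xs \<and> cycle_edges ys = cycle_edges xs"
    using tadpole_structure[OF s cn xs(1) cV long[unfolded cV] w(1,2) l] xs(2) by blast
  have "graph_iso V E (tadpole_V n) (tadpole_E g n)"
    using h unfolding tadpole_labelling_def tadpole_V_def by (intro graph_iso_of_bij_betw) auto
  moreover have "unicyclic V E" using unicyclic_of_unique_cycle[OF cn xs(1)] cycles by blast
  ultimately show ?thesis using small(2) cV tadpole_value by simp
qed

end
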